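(* Assume the setting and standing assumptions (A1), (A2) described in the context. If either $\Psi^-$ or $\Psi^+$ is initially positive and has a negative sign change, then there exists $\Delta\in\mathcal{D}$ for which the system exhibits microphase separation.
   Context: Let $n,m\ge 1$, $B\in\mathbb{Z}^{n\times m}$, $C\in\mathbb{Z}^{m\times n}$. Given bounds $0\le \Delta_j^-\le \Delta_j^+<\infty$ ($j=1,\dots,m$), let $\mathcal{D}$ be the set of diagonal matrices $\Delta=\mathrm{diag}(\Delta_1,\dots,\Delta_m)$ with $\Delta_j^-\le\Delta_j\le\Delta_j^+$ for all $j$. Let $J_2,J_4\in\mathbb{R}^{n\times n}$ be symmetric. Standing assumptions: (A1) for every $\Delta\in\mathcal{D}$, the matrix $B\Delta C$ is singular and has $n-1$ eigenvalues (counted with multiplicity) with negative real part (so $0$ is a simple eigenvalue), and there is a nonzero vector $v\ge 0$ with $v^\top B=0$; (A2) $J_2$ is indefinite, $J_4$ is negative semidefinite, and there exists $\bar\kappa$ such that $\bar\kappa^2 J_2+\bar\kappa^4 J_4$ is negative definite. For real $\kappa\ge 0$ and $\Delta\in\mathcal{D}$ set $J(\Delta,\kappa)=B\Delta C+\kappa^2 J_2+\kappa^4 J_4$ and let $\rho(\Delta,\kappa)$ be its spectral abscissa (the maximum real part of its eigenvalues). Define $\Psi^-(\kappa)=\min_{\Delta\in\mathcal{D}}\det[-J(\Delta,\kappa)]$ and $\Psi^+(\kappa)=\max_{\Delta\in\mathcal{D}}\det[-J(\Delta,\kappa)]$. A continuous function $f$ on $[0,\infty)$ is initially positive (resp. negative)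 if there is $\hat\kappa>0$ with $f>0$ (resp. $f<0$) on $(0,\hat\kappa)$; it has a negative sign change if $f(\kappa_1)>0>f(\kappa_2)$ for some $\kappa_1<\kappa_2$. For a given $\Delta\in\mathcal{D}$, the system exhibits microphase separation (MS) if there exists $\hat\kappa>0$ with $\rho(\Delta,\kappa)<0$ for all $\kappa\in(0,\hat\kappa)$, and there exist $\hat\kappa<\kappa_1<\kappa_2$ with $\rho(\Delta,\kappa_1)>0$ and $\rho(\Delta,\kappa_2)<0$. *)

theory Defs
  imports Complex_Main "Jordan_Normal_Form.Char_Poly"
begin

text \<open>Matrices are Jordan_Normal_Form matrices with explicit dimensions (carrier_mat).
  Eigenvalues of a real matrix are the complex eigenvalues of its complexification.\<close>

definition cplx_mat :: "real mat \<Rightarrow> complex mat" where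
  "cplx_mat A = map_mat complex_of_real A"

definition real_of_int_mat :: "int mat \<Rightarrow> real mat" where
  "real_of_int_mat A = map_mat real_of_int A"

definition spectral_abscissa :: "real mat \<Rightarrow> real" where
  "spectral_abscissa A = Max (Re ` {k. eigenvalue (cplx_mat A) k})"

definition num_neg_eigs :: "real mat \<Rightarrow> nat" where
  "num_neg_eigs A = (\<Sum>k\<in>{k. poly (char_poly (cplx_mat A)) k = 0 \<and> Re k < 0}.
                        order k (char_poly (cplx_mat A)))"

definition diag_set :: "nat \<Rightarrow> (nat \<Rightarrow> real) \<Rightarrow> (nat \<Rightarrow> real) \<Rightarrow> real mat set" where
  "diag_set m lo hi = {D \<in> carrier_mat m m. diagonal_mat D \<and>
                          (\<forall>j<m. lo j \<le> D $$ (j,j) \<and> D $$ (j,j) \<le> hi j)}"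

definition quad_form :: "real mat \<Rightarrow> real vec \<Rightarrow> real" where
  "quad_form A x = x \<bullet> (A *\<^sub>v x)"

definition symmetric_mat :: "real mat \<Rightarrow> bool" where
  "symmetric_mat A \<longleftrightarrow> transpose_mat A = A"

definition indefinite_mat :: "nat \<Rightarrow> real mat \<Rightarrow> bool" where
  "indefinite_mat n A \<longleftrightarrow> (\<exists>x\<in>carrier_vec n. quad_form A x > 0) \<and> (\<exists>y\<in>carrier_vec n. quad_form A y < 0)"

definition neg_semidef_mat :: "nat \<Rightarrow> real mat \<Rightarrow> bool" where
  "neg_semidef_mat n A \<longleftrightarrow> (\<forall>x\<in>carrier_vec n. quad_form A x \<le> 0)"

definition neg_def_mat :: "nat \<Rightarrow> real mat \<Rightarrow> bool" where
  "neg_def_mat n A \<longleftrightarrow> (\<forall>x\<in>carrier_vec n. x \<noteq> 0\<^sub>v n \<longrightarrow> quad_form A x < 0)"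

definition Jmat :: "int mat \<Rightarrow> int mat \<Rightarrow> real mat \<Rightarrow> real mat \<Rightarrow> real mat \<Rightarrow> real \<Rightarrow> real mat" where
  "Jmat B C J2 J4 D \<kappa> = real_of_int_mat B * D * real_of_int_mat C + (\<kappa>^2) \<cdot>\<^sub>m J2 + (\<kappa>^4) \<cdot>\<^sub>m J4"

definition initially_positive :: "(real \<Rightarrow> real) \<Rightarrow> bool" where
  "initially_positive f \<longleftrightarrow> (\<exists>k0>0. \<forall>\<kappa>. 0 < \<kappa> \<and> \<kappa> < k0 \<longrightarrow> f \<kappa> > 0)"

definition neg_sign_change :: "(real \<Rightarrow> real) \<Rightarrow> bool" where
  "neg_sign_change f \<longleftrightarrow> (\<exists>\<kappa>1 \<kappa>2. 0 \<le> \<kappa>1 \<and> \<kappa>1 < \<kappa>2 \<and> f \<kappa>1 > 0 \<and> f \<kappa>2 < 0)"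

definition microphase_sep :: "(real \<Rightarrow> real) \<Rightarrow> bool" where
  "microphase_sep rho \<longleftrightarrow> (\<exists>k0>0. (\<forall>\<kappa>. 0 < \<kappa> \<and> \<kappa> < k0 \<longrightarrow> rho \<kappa> < 0) \<and>
      (\<exists>\<kappa>1 \<kappa>2. k0 < \<kappa>1 \<and> \<kappa>1 < \<kappa>2 \<and> rho \<kappa>1 > 0 \<and> rho \<kappa>2 < 0))"

end

(*
  Fix \<Delta> in \<D>, put M = B \<Delta> C and J(\<kappa>) = M + \<kappa>^2 J2 + \<kappa>^4 J4. By (A1) the characteristic
  polynomial of M has a simple root at 0 and all other roots in the open left half plane, so
  its linear coefficient is positive. For small \<kappa> > 0 the roots of det (z - J(\<kappa>)) stay close
  to those of M, and the root near 0 satisfies z g = - det (- J(\<kappa>)) with Re g close to that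
  linear coefficient; hence \<rho>(\<Delta>, \<kappa>) < 0 as long as det (- J(\<kappa>)) > 0. Where det (- J(\<kappa>)) < 0,
  the monic characteristic polynomial is negative at 0 and has a positive root, so \<rho> > 0. For
  large \<kappa> the negative definite form of \<kappa>\<^sub>0^2 J2 + \<kappa>\<^sub>0^4 J4 dominates the quadratic form
  of J(\<kappa>), so \<rho> < 0 again. Thus microphase separation occurs for every \<Delta> for which
  \<kappa> \<mapsto> det (- J(\<Delta>, \<kappa>)) is initially positive and later negative.

  Such a \<Delta> exists. If \<Psi>^- has the sign pattern, take \<Delta> with det (- J(\<Delta>, \<kappa>\<^sub>2)) < 0 where
  \<Psi>^-(\<kappa>\<^sub>2) < 0; near 0 its determinant is bounded below by \<Psi>^- > 0. If \<Psi>^+ has it, note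
  that det (- J(\<Delta>, \<kappa>)) is affine in each \<Delta>\<^sub>j, so \<Psi>^+ is a maximum over the finitely many
  vertices of \<D>; each vertex determinant is a polynomial in \<kappa>, hence of constant sign near 0,
  so some vertex is initially positive, and at \<kappa>\<^sub>2 it is at most \<Psi>^+(\<kappa>\<^sub>2) < 0.
*)
theory Submission
  imports Defs
begin

section \<open>Roots of polynomials with converging coefficients\<close>

lemma bounded_real_seq_has_convergent_subseq:
  fixes f :: "nat \<Rightarrow> real"
  assumes "\<And>k. \<bar>f k\<bar> \<le> b"
  shows "\<exists>r l. strict_mono r \<and> (f \<circ> r) \<longlonglongrightarrow> l"
proof -
  obtain r where r: "strict_mono r" "monoseq (\<lambda>k. f (r k))" using seq_monosub by blast
  have "Bseq (\<lambda>k. f (r k))" using assms by (intro BseqI'[of _ b]) auto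
  with r(2) have "convergent (\<lambda>k. f (r k))" using Bseq_monoseq_convergent by blast
  with r(1) show ?thesis by (auto simp: convergent_def o_def)
qed

lemma bounded_complex_seq_has_convergent_subseq:
  fixes f :: "nat \<Rightarrow> complex"
  assumes "\<And>k. norm (f k) \<le> b"
  shows "\<exists>r l. strict_mono r \<and> (f \<circ> r) \<longlonglongrightarrow> l"
proof -
  have re: "\<bar>Re (f k)\<bar> \<le> b" for k using assms[of k] abs_Re_le_cmod order_trans by blast
  obtain r x where r: "strict_mono r" "(\<lambda>k. Re (f (r k))) \<longlonglongrightarrow> x"
    using bounded_real_seq_has_convergent_subseq[of "\<lambda>k. Re (f k)" b, OF re] by (auto simp: o_def)
  have im: "\<bar>Im (f (r k))\<bar> \<le> b" for k using assms[of "r k"] abs_Im_le_cmod order_trans by blast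
  obtain s y where s: "strict_mono s" "(\<lambda>k. Im (f (r (s k)))) \<longlonglongrightarrow> y"
    using bounded_real_seq_has_convergent_subseq[of "\<lambda>k. Im (f (r k))" b, OF im] by (auto simp: o_def)
  have "(\<lambda>k. Re (f (r (s k)))) \<longlonglongrightarrow> x"
    using LIMSEQ_subseq_LIMSEQ[OF r(2) s(1)] by (simp add: o_def)
  from tendsto_Complex[OF this s(2)] have "(\<lambda>k. f (r (s k))) \<longlonglongrightarrow> Complex x y" by simp
  moreover have "strict_mono (r \<circ> s)" using r(1) s(1) by (rule strict_mono_o)
  ultimately show ?thesis by (auto simp: o_def)
qed

lemma bounded_seq_has_componentwise_convergent_subseq:
  fixes g :: "nat \<Rightarrow> nat \<Rightarrow> real"
  assumes "\<And>k i. i < n \<Longrightarrow> \<bar>g k i\<bar> \<le> b"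
  shows "\<exists>r l. strict_mono r \<and> (\<forall>i<n. (\<lambda>k. g (r k) i) \<longlonglongrightarrow> l i)"
  using assms
proof (induction n)
  case 0
  show ?case by (rule exI[of _ id]) (simp add: strict_mono_def)
next
  case (Suc n)
  then obtain r l where r: "strict_mono r" "\<forall>i<n. (\<lambda>k. g (r k) i) \<longlonglongrightarrow> l i" by force
  have bd: "\<bar>g (r k) n\<bar> \<le> b" for k using Suc.prems by simp
  obtain s x where s: "strict_mono s" "(\<lambda>k. g (r (s k)) n) \<longlonglongrightarrow> x"
    using bounded_real_seq_has_convergent_subseq[of "\<lambda>k. g (r k) n" b, OF bd] by (auto simp: o_def)
  have "(\<lambda>k. g (r (s k)) i) \<longlonglongrightarrow> (l(n := x)) i" if "i < Suc n" for i
  proof (cases "i = n")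
    case False
    with that have "(\<lambda>k. g (r k) i) \<longlonglongrightarrow> l i" using r(2) by simp
    from LIMSEQ_subseq_LIMSEQ[OF this s(1)] False show ?thesis by (simp add: o_def)
  qed (use s(2) in simp)
  moreover have "strict_mono (r \<circ> s)" using r(1) s(1) by (rule strict_mono_o)
  ultimately show ?case unfolding o_def by blast
qed

lemma poly_eq_sum_atMost:
  fixes p :: "'a::comm_semiring_1 poly"
  assumes "degree p \<le> n"
  shows "poly p z = (\<Sum>i\<le>n. coeff p i * z ^ i)"
proof -
  have "poly p z = (\<Sum>i\<le>degree p. coeff p i * z ^ i)" by (rule poly_altdef)
  also have "\<dots> = (\<Sum>i\<le>n. coeff p i * z ^ i)"
    using assms by (intro sum.mono_neutral_left) (auto simp: coeff_eq_0)
  finally show ?thesis .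
qed

lemma tendsto_poly_coeffwise:
  fixes p :: "nat \<Rightarrow> 'a::real_normed_field poly"
  assumes "\<And>k. degree (p k) \<le> n" and "degree q \<le> n"
    and "\<And>i. (\<lambda>k. coeff (p k) i) \<longlonglongrightarrow> coeff q i" and "z \<longlonglongrightarrow> z0"
  shows "(\<lambda>k. poly (p k) (z k)) \<longlonglongrightarrow> poly q z0"
  unfolding poly_eq_sum_atMost[OF assms(1)] poly_eq_sum_atMost[OF assms(2)]
  using assms(3,4) by (intro tendsto_intros)

lemma poly_eq_coeff_0_plus_poly_shift:
  "poly p z = coeff p 0 + z * poly (poly_shift 1 p) z"
proof -
  have "pCons (coeff p 0) (poly_shift 1 p) = p"
    by (simp add: poly_eq_iff coeff_poly_shift coeff_pCons')
  then show ?thesis by (metis poly_pCons)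
qed

lemma degree_poly_shift_le: "degree (poly_shift k p) \<le> degree p"
  by (rule degree_le) (simp add: coeff_poly_shift coeff_eq_0)

lemma monic_poly_root_norm_le:
  fixes p :: "complex poly"
  assumes monic: "lead_coeff p = 1" and root: "poly p z = 0"
  shows "norm z \<le> 1 + (\<Sum>i<degree p. norm (coeff p i))"
proof (cases "norm z \<le> 1")
  case True
  then show ?thesis by (smt (verit) sum_nonneg norm_ge_zero)
next
  case False
  define d where "d = degree p"
  have "d \<noteq> 0"
  proof
    assume "d = 0"
    with root monic show False by (simp add: poly_altdef d_def)
  qed
  have "0 = (\<Sum>i\<le>d. coeff p i * z ^ i)" using root by (simp add: poly_altdef d_def)
  also have "\<dots> = (\<Sum>i<d. coeff p i * z ^ i) + z ^ d"
    using monic by (simp add: d_def lessThan_Suc_atMost[symmetric])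
  finally have "z ^ d = - (\<Sum>i<d. coeff p i * z ^ i)" by (simp add: eq_neg_iff_add_eq_0 add.commute)
  then have "norm z ^ d = norm (\<Sum>i<d. coeff p i * z ^ i)" by (metis norm_minus_cancel norm_power)
  also have "\<dots> \<le> (\<Sum>i<d. norm (coeff p i) * norm z ^ i)"
    by (rule order_trans[OF norm_sum]) (simp add: norm_mult norm_power)
  also have "\<dots> \<le> (\<Sum>i<d. norm (coeff p i) * norm z ^ (d - 1))"
    using False by (intro sum_mono mult_left_mono power_increasing) auto
  also have "\<dots> = (\<Sum>i<d. norm (coeff p i)) * norm z ^ (d - 1)" by (simp add: sum_distrib_right)
  finally have "norm z * norm z ^ (d - 1) \<le> (\<Sum>i<d. norm (coeff p i)) * norm z ^ (d - 1)"
    using \<open>d \<noteq> 0\<close> by (metis power_eq_if)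
  moreover have "norm z ^ (d - 1) > 0" using False by (intro zero_less_power) linarith
  ultimately show ?thesis unfolding d_def by simp
qed

lemma convergent_subseq_of_roots:
  fixes p :: "nat \<Rightarrow> complex poly"
  assumes deg: "\<And>k. degree (p k) = n" and monic: "\<And>k. lead_coeff (p k) = 1"
    and coeffs: "\<And>i. (\<lambda>k. coeff (p k) i) \<longlonglongrightarrow> coeff q i" and "degree q \<le> n"
    and roots: "\<And>k. poly (p k) (z k) = 0"
  shows "\<exists>r z0. strict_mono r \<and> (z \<circ> r) \<longlonglongrightarrow> z0 \<and> poly q z0 = 0"
proof -
  have "(\<lambda>k. \<Sum>i<n. norm (coeff (p k) i)) \<longlonglongrightarrow> (\<Sum>i<n. norm (coeff q i))"
    by (intro tendsto_intros coeffs)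
  then have "Bseq (\<lambda>k. \<Sum>i<n. norm (coeff (p k) i))" by (rule convergent_imp_Bseq[OF convergentI])
  then obtain b where b: "\<And>k. norm (\<Sum>i<n. norm (coeff (p k) i)) \<le> b"
    unfolding Bseq_def by blast
  have "norm (z k) \<le> 1 + b" for k
    using monic_poly_root_norm_le[OF monic roots, of k] deg[of k] b[of k]
    by (simp add: abs_of_nonneg sum_nonneg)
  then obtain r z0 where r: "strict_mono r" and lim: "(z \<circ> r) \<longlonglongrightarrow> z0"
    using bounded_complex_seq_has_convergent_subseq by blast
  have "(\<lambda>k. poly (p (r k)) (z (r k))) \<longlonglongrightarrow> poly q z0"
  proof (rule tendsto_poly_coeffwise)
    show "(\<lambda>k. coeff (p (r k)) i) \<longlonglongrightarrow> coeff q i" for i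
      using LIMSEQ_subseq_LIMSEQ[OF coeffs r] by (simp add: o_def)
  qed (use deg assms(4) lim in \<open>auto simp: o_def\<close>)
  then have "poly q z0 = 0" by (simp add: roots LIMSEQ_const_iff)
  with r lim show ?thesis by blast
qed

lemma Re_neg_if_mult_eq_neg_real:
  fixes z g :: complex
  assumes "z * g = - of_real c" and "c > 0" and "Re g > 0"
  shows "Re z < 0"
proof -
  have "Re z * ((Re g)^2 + (Im g)^2) = Re ((z * g) * cnj g)"
    by (simp add: complex_mult_cnj mult.assoc)
  also have "\<dots> = - c * Re g" using assms(1) by simp
  also have "\<dots> < 0" using assms(2,3) by simp
  finally have "Re z * ((Re g)^2 + (Im g)^2) < 0" .
  moreover have "(Re g)^2 + (Im g)^2 \<ge> 0" by simp
  ultimately show ?thesis by (simp add: mult_less_0_iff)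
qed

text \<open>The roots of \<open>P k\<close> accumulate at roots of \<open>Q\<close>, so a subsequence of roots in the closed
  right half plane tends to \<open>0\<close>. Near \<open>0\<close>, \<open>poly (P k) z = 0\<close> reads \<open>z * g = - coeff (P k) 0\<close>
  with \<open>Re g\<close> close to \<open>coeff Q 1 > 0\<close>, which pushes \<open>z\<close> into the open left half plane.\<close>
lemma ex_root_in_left_half_plane:
  fixes P :: "nat \<Rightarrow> real poly"
  assumes deg: "\<And>k. degree (P k) = n" and monic: "\<And>k. lead_coeff (P k) = 1"
    and coeffs: "\<And>i. (\<lambda>k. coeff (P k) i) \<longlonglongrightarrow> coeff Q i" and "degree Q \<le> n"
    and roots_Q: "\<And>z. poly (map_poly of_real Q) z = 0 \<Longrightarrow> Re z \<ge> 0 \<Longrightarrow> z = 0"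
    and slope: "coeff Q 1 > 0" and const_pos: "\<And>k. coeff (P k) 0 > 0"
    and roots: "\<And>k. poly (map_poly of_real (P k)) (z k) = 0"
  shows "\<exists>k. Re (z k) < 0"
proof (rule ccontr)
  assume "\<not> ?thesis"
  then have right: "Re (z k) \<ge> 0" for k by (simp add: not_less)
  define p where "p k = map_poly complex_of_real (P k)" for k
  define q where "q = map_poly complex_of_real Q"
  have deg_p: "degree (p k) = n" and monic_p: "lead_coeff (p k) = 1" for k
    using deg monic by (simp_all add: p_def)
  have coeffs_p: "(\<lambda>k. coeff (p k) i) \<longlonglongrightarrow> coeff q i" for i
    using coeffs by (simp add: p_def q_def tendsto_of_real)
  have "degree q \<le> n" using \<open>degree Q \<le> n\<close> by (simp add: q_def)
  have roots_p: "poly (p k) (z k) = 0" for k using roots by (simp add: p_def)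
  obtain r z0 where r: "strict_mono r" and lim: "(\<lambda>k. z (r k)) \<longlonglongrightarrow> z0" and "poly q z0 = 0"
    using convergent_subseq_of_roots[OF deg_p monic_p coeffs_p \<open>degree q \<le> n\<close> roots_p]
    by (auto simp: o_def)
  moreover have "Re z0 \<ge> 0" using right by (intro LIMSEQ_le_const[OF tendsto_Re[OF lim]]) auto
  ultimately have "z0 = 0" using roots_Q unfolding q_def by blast
  define g where "g k = poly (poly_shift 1 (p (r k))) (z (r k))" for k
  have shift_p: "degree (poly_shift 1 (p k)) \<le> n" for k
    using degree_poly_shift_le[of 1 "p k"] deg_p by simp
  have shift_q: "degree (poly_shift 1 q) \<le> n"
    using degree_poly_shift_le[of 1 q] \<open>degree q \<le> n\<close> by simp
  have "(\<lambda>k. coeff (poly_shift 1 (p (r k))) i) \<longlonglongrightarrow> coeff (poly_shift 1 q) i" for i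
    using LIMSEQ_subseq_LIMSEQ[OF coeffs_p r] by (simp add: coeff_poly_shift o_def)
  from tendsto_poly_coeffwise[of "\<lambda>k. poly_shift 1 (p (r k))" n "poly_shift 1 q", OF shift_p shift_q this lim]
  have "g \<longlonglongrightarrow> poly (poly_shift 1 q) z0" unfolding g_def .
  moreover have "poly (poly_shift 1 q) z0 = of_real (coeff Q 1)"
    using \<open>z0 = 0\<close> by (simp add: poly_0_coeff_0 coeff_poly_shift q_def)
  ultimately have "(\<lambda>k. Re (g k)) \<longlonglongrightarrow> coeff Q 1"
    using tendsto_Re by fastforce
  from order_tendstoD(1)[OF this slope] obtain N where gpos: "Re (g N) > 0"
    by (auto simp: eventually_sequentially)
  have "z (r N) * g N = - of_real (coeff (P (r N)) 0)"
    using roots[of "r N"] poly_eq_coeff_0_plus_poly_shift[of "p (r N)" "z (r N)"]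
    by (simp add: g_def p_def eq_neg_iff_add_eq_0 add.commute)
  from Re_neg_if_mult_eq_neg_real[OF this const_pos gpos] right[of "r N"] show False by simp
qed

lemma roots_in_left_half_plane_near_0:
  fixes P :: "real \<Rightarrow> real poly"
  assumes deg: "\<And>\<kappa>. degree (P \<kappa>) = n" and monic: "\<And>\<kappa>. lead_coeff (P \<kappa>) = 1"
    and cont: "\<And>i. isCont (\<lambda>\<kappa>. coeff (P \<kappa>) i) 0"
    and roots0: "\<And>z. poly (map_poly of_real (P 0)) z = 0 \<Longrightarrow> Re z \<ge> 0 \<Longrightarrow> z = 0"
    and slope0: "coeff (P 0) 1 > 0"
    and pos: "initially_positive (\<lambda>\<kappa>. coeff (P \<kappa>) 0)"
  shows "\<exists>\<epsilon>>0. \<forall>\<kappa>. 0 < \<kappa> \<and> \<kappa> < \<epsilon> \<longrightarrow> (\<forall>z. poly (map_poly of_real (P \<kappa>)) z = 0 \<longrightarrow> Re z < 0)"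
proof (rule ccontr)
  obtain e where "e > 0" and e: "\<And>\<kappa>. 0 < \<kappa> \<Longrightarrow> \<kappa> < e \<Longrightarrow> coeff (P \<kappa>) 0 > 0"
    using pos unfolding initially_positive_def by blast
  assume contra: "\<not> ?thesis"
  have "\<exists>\<kappa> z. (0 < \<kappa> \<and> \<kappa> < min e (inverse (Suc k))) \<and>
      poly (map_poly of_real (P \<kappa>)) z = 0 \<and> Re z \<ge> 0" for k
  proof -
    have "min e (inverse (Suc k)) > 0" using \<open>e > 0\<close> by simp
    with contra obtain \<kappa> z where "0 < \<kappa>" "\<kappa> < min e (inverse (Suc k))"
      "poly (map_poly of_real (P \<kappa>)) z = 0" "\<not> Re z < 0"
      by blast
    then show ?thesis by (intro exI[of _ \<kappa>] exI[of _ z]) auto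
  qed
  then obtain K Z where KZ: "\<And>k. (0 < K k \<and> K k < min e (inverse (Suc k))) \<and>
      poly (map_poly of_real (P (K k))) (Z k) = 0 \<and> Re (Z k) \<ge> 0"
    by metis
  have "K \<longlonglongrightarrow> 0"
    by (rule real_tendsto_sandwich[of "\<lambda>_. 0" _ _ "\<lambda>k. inverse (Suc k)"])
      (use KZ LIMSEQ_inverse_real_of_nat in \<open>auto intro!: always_eventually less_imp_le\<close>)
  then have "(\<lambda>k. coeff (P (K k)) i) \<longlonglongrightarrow> coeff (P 0) i" for i
    by (rule isCont_tendsto_compose[OF cont])
  moreover have "degree (P 0) \<le> n" using deg by simp
  moreover have "coeff (P (K k)) 0 > 0" for k using KZ[of k] e by simp
  ultimately obtain k where "Re (Z k) < 0"
    using ex_root_in_left_half_plane[of "\<lambda>k. P (K k)" n "P 0" Z] deg monic roots0 slope0 KZ by blast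
  with KZ[of k] show False by simp
qed

section \<open>Quadratic forms\<close>

lemma index_mult_mat_sum:
  assumes "A \<in> carrier_mat a b" and "B \<in> carrier_mat b c" and "i < a" and "k < c"
  shows "(A * B) $$ (i,k) = (\<Sum>j<b. A $$ (i,j) * B $$ (j,k))"
  using assms by (auto simp: scalar_prod_def atLeast0LessThan intro!: sum.cong)

definition quad_sum :: "nat \<Rightarrow> real mat \<Rightarrow> (nat \<Rightarrow> real) \<Rightarrow> real" where
  "quad_sum n A f = (\<Sum>i<n. \<Sum>j<n. A $$ (i,j) * f i * f j)"

lemma quad_form_vec:
  assumes "A \<in> carrier_mat n n"
  shows "quad_form A (vec n f) = quad_sum n A f"
proof -
  have "(A *\<^sub>v vec n f) $ i = (\<Sum>j<n. A $$ (i,j) * f j)" if "i < n" for i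
    using assms that by (auto simp: scalar_prod_def atLeast0LessThan intro!: sum.cong)
  then show ?thesis
    using assms by (auto simp: quad_form_def quad_sum_def scalar_prod_def atLeast0LessThan
        sum_distrib_left ac_simps intro!: sum.cong)
qed

lemma quad_sum_neg_if_neg_def_mat:
  assumes "A \<in> carrier_mat n n" and "neg_def_mat n A" and "\<exists>i<n. f i \<noteq> 0"
  shows "quad_sum n A f < 0"
proof -
  have "vec n f \<noteq> 0\<^sub>v n" using assms(3) by (auto simp: vec_eq_iff)
  with assms(2) show ?thesis unfolding neg_def_mat_def quad_form_vec[OF assms(1), symmetric] by auto
qed

lemma quad_sum_nonpos_if_neg_semidef_mat:
  assumes "A \<in> carrier_mat n n" and "neg_semidef_mat n A"
  shows "quad_sum n A f \<le> 0"
  using assms unfolding neg_semidef_mat_def quad_form_vec[OF assms(1), symmetric] by auto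

lemma quad_sum_add:
  assumes "A \<in> carrier_mat n n" and "B \<in> carrier_mat n n"
  shows "quad_sum n (A + B) f = quad_sum n A f + quad_sum n B f"
  using assms by (simp add: quad_sum_def sum.distrib[symmetric] algebra_simps)

lemma quad_sum_smult:
  assumes "A \<in> carrier_mat n n"
  shows "quad_sum n (t \<cdot>\<^sub>m A) f = t * quad_sum n A f"
  using assms by (simp add: quad_sum_def sum_distrib_left algebra_simps)

lemma quad_sum_scale: "quad_sum n A (\<lambda>i. t * f i) = t^2 * quad_sum n A f"
  by (simp add: quad_sum_def sum_distrib_left power2_eq_square algebra_simps)

lemma quad_sum_le_abs_entries:
  "quad_sum n A f \<le> (\<Sum>i<n. \<Sum>j<n. \<bar>A $$ (i,j)\<bar>) * (\<Sum>i<n. (f i)^2)"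
proof -
  let ?S = "\<Sum>i<n. (f i)^2"
  have sq: "(f i)^2 \<le> ?S" if "i < n" for i
    using that by (intro member_le_sum) auto
  have "A $$ (i,j) * f i * f j \<le> \<bar>A $$ (i,j)\<bar> * ?S" if "i < n" "j < n" for i j
  proof -
    have "2 * \<bar>f i\<bar> * \<bar>f j\<bar> \<le> \<bar>f i\<bar>^2 + \<bar>f j\<bar>^2" by (rule sum_squares_bound)
    then have "\<bar>f i * f j\<bar> \<le> ?S" using sq[OF that(1)] sq[OF that(2)] by (simp add: abs_mult)
    then have "\<bar>A $$ (i,j)\<bar> * \<bar>f i * f j\<bar> \<le> \<bar>A $$ (i,j)\<bar> * ?S" by (rule mult_left_mono) simp
    moreover have "A $$ (i,j) * f i * f j \<le> \<bar>A $$ (i,j)\<bar> * \<bar>f i * f j\<bar>"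
      by (metis abs_ge_self abs_mult mult.assoc)
    ultimately show ?thesis by linarith
  qed
  then have "quad_sum n A f \<le> (\<Sum>i<n. \<Sum>j<n. \<bar>A $$ (i,j)\<bar> * ?S)"
    unfolding quad_sum_def by (intro sum_mono) auto
  then show ?thesis by (simp add: sum_distrib_right)
qed

lemma quad_sum_le_if_le_on_unit_sphere:
  assumes "\<And>g. (\<Sum>i<n. (g i)^2) = 1 \<Longrightarrow> quad_sum n A g \<le> - c"
  shows "quad_sum n A f \<le> - c * (\<Sum>i<n. (f i)^2)"
proof (cases "(\<Sum>i<n. (f i)^2) = 0")
  case True
  then have "\<forall>i<n. f i = 0" by (simp add: sum_nonneg_eq_0_iff)
  with True show ?thesis by (simp add: quad_sum_def)
next
  case False
  define s where "s = (\<Sum>i<n. (f i)^2)"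
  have "s > 0" using False sum_nonneg[of "{..<n}" "\<lambda>i. (f i)^2"] unfolding s_def by simp
  define g where "g i = f i / sqrt s" for i
  have "(\<Sum>i<n. (g i)^2) = 1"
    using \<open>s > 0\<close> by (simp add: g_def power_divide sum_divide_distrib[symmetric] s_def)
  then have "quad_sum n A g \<le> - c" by (rule assms)
  then have "s * quad_sum n A g \<le> s * - c" using \<open>s > 0\<close> by (intro mult_left_mono) auto
  moreover have "quad_sum n A f = s * quad_sum n A g"
    using quad_sum_scale[of n A "sqrt s" g] \<open>s > 0\<close> by (simp add: g_def)
  ultimately show ?thesis by (simp add: s_def algebra_simps)
qed

text \<open>Compactness of the unit sphere turns pointwise negative definiteness into a uniform bound.\<close>
lemma neg_def_mat_uniform:
  assumes A: "A \<in> carrier_mat n n" and nd: "neg_def_mat n A"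
  shows "\<exists>c>0. \<forall>f. quad_sum n A f \<le> - c * (\<Sum>i<n. (f i)^2)"
proof (rule ccontr)
  assume contra: "\<not> ?thesis"
  have "\<exists>g. (\<Sum>i<n. (g i)^2) = 1 \<and> quad_sum n A g > - inverse (Suc k)" for k
  proof (rule ccontr)
    assume "\<not> ?thesis"
    then have "quad_sum n A f \<le> - inverse (Suc k) * (\<Sum>i<n. (f i)^2)" for f
      by (intro quad_sum_le_if_le_on_unit_sphere) (auto simp: not_less)
    then have "\<exists>c>0. \<forall>f. quad_sum n A f \<le> - c * (\<Sum>i<n. (f i)^2)"
      by (intro exI[of _ "inverse (Suc k)"]) auto
    with contra show False ..
  qed
  then obtain g where unit: "\<And>k. (\<Sum>i<n. (g k i)^2) = 1"
    and almost: "\<And>k. quad_sum n A (g k) > - inverse (Suc k)"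
    by metis
  have "\<bar>g k i\<bar> \<le> 1" if "i < n" for k i
  proof -
    have "(g k i)^2 \<le> (\<Sum>i<n. (g k i)^2)" using that by (intro member_le_sum) auto
    then show ?thesis using unit[of k] by (simp add: abs_square_le_1)
  qed
  then obtain r l where r: "strict_mono r" and lim: "\<forall>i<n. (\<lambda>k. g (r k) i) \<longlonglongrightarrow> l i"
    using bounded_seq_has_componentwise_convergent_subseq by blast
  have "(\<lambda>k. \<Sum>i<n. (g (r k) i)^2) \<longlonglongrightarrow> (\<Sum>i<n. (l i)^2)"
    using lim by (intro tendsto_intros) auto
  then have "(\<Sum>i<n. (l i)^2) = 1" using unit by (simp add: LIMSEQ_const_iff)
  then have "\<exists>i<n. l i \<noteq> 0" by (metis (no_types, lifting) lessThan_iff power_zero_numeral sum.neutral zero_neq_one)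
  then have "quad_sum n A l < 0" by (rule quad_sum_neg_if_neg_def_mat[OF A nd])
  moreover have "quad_sum n A l \<ge> 0"
  proof (rule tendsto_le[OF trivial_limit_sequentially])
    show "(\<lambda>k. quad_sum n A (g (r k))) \<longlonglongrightarrow> quad_sum n A l"
      unfolding quad_sum_def using lim by (intro tendsto_intros) auto
    show "(\<lambda>k. - inverse (real (Suc (r k)))) \<longlonglongrightarrow> 0"
      using tendsto_minus[OF LIMSEQ_subseq_LIMSEQ[OF LIMSEQ_inverse_real_of_nat r]] by (simp add: o_def)
    show "\<forall>\<^sub>F k in sequentially. - inverse (real (Suc (r k))) \<le> quad_sum n A (g (r k))"
      using almost by (intro always_eventually allI less_imp_le) 
  qed
  ultimately show False by simp
qed

text \<open>\<open>x\<close> and \<open>y\<close> are the real and imaginary parts of an eigenvector; as \<open>A\<close> is real, no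
  symmetry of \<open>A\<close> is needed.\<close>
lemma eigenvalue_cplx_mat_Re_quad_sum:
  assumes A: "A \<in> carrier_mat n n" and ev: "eigenvalue (cplx_mat A) z"
  shows "\<exists>x y. (\<exists>i<n. x i \<noteq> 0 \<or> y i \<noteq> 0) \<and>
    Re z * (\<Sum>i<n. (x i)^2 + (y i)^2) = quad_sum n A x + quad_sum n A y"
proof -
  have cA: "cplx_mat A \<in> carrier_mat n n" using A by (simp add: cplx_mat_def)
  from ev obtain v where v: "v \<in> carrier_vec n" "v \<noteq> 0\<^sub>v n" "cplx_mat A *\<^sub>v v = z \<cdot>\<^sub>v v"
    unfolding eigenvalue_def eigenvector_def using cA by auto
  define x where "x i = Re (v $ i)" for i
  define y where "y i = Im (v $ i)" for i
  have row: "(\<Sum>j<n. of_real (A $$ (i,j)) * v $ j) = z * v $ i" if "i < n" for i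
  proof -
    have "(cplx_mat A *\<^sub>v v) $ i = (\<Sum>j<n. of_real (A $$ (i,j)) * v $ j)"
      using that cA A v(1) by (auto simp: scalar_prod_def atLeast0LessThan cplx_mat_def intro!: sum.cong)
    then show ?thesis using v that by simp
  qed
  have entry: "Re (cnj a * (of_real r * b)) = r * Re a * Re b + r * Im a * Im b" for a b r
    by (simp add: algebra_simps)
  have "quad_sum n A x + quad_sum n A y =
      Re (\<Sum>i<n. cnj (v $ i) * (\<Sum>j<n. of_real (A $$ (i,j)) * v $ j))"
    by (simp add: quad_sum_def x_def y_def sum_distrib_left Re_sum entry sum.distrib)
      (simp only: mult_ac)
  also have "\<dots> = Re (\<Sum>i<n. cnj (v $ i) * (z * v $ i))" using row by simp
  also have "\<dots> = Re z * (\<Sum>i<n. (x i)^2 + (y i)^2)"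
    by (simp add: Re_sum sum_distrib_left x_def y_def algebra_simps power2_eq_square)
  finally have "Re z * (\<Sum>i<n. (x i)^2 + (y i)^2) = quad_sum n A x + quad_sum n A y" ..
  moreover have "\<exists>i<n. x i \<noteq> 0 \<or> y i \<noteq> 0"
  proof (rule ccontr)
    assume "\<not> ?thesis"
    then have "v = 0\<^sub>v n" using v(1) by (intro eq_vecI) (auto simp: x_def y_def complex_eq_iff)
    with v(2) show False ..
  qed
  ultimately show ?thesis by blast
qed

lemma eigenvalue_Re_le_if_quad_sum_le:
  assumes "A \<in> carrier_mat n n" and "eigenvalue (cplx_mat A) z"
    and bound: "\<And>f. quad_sum n A f \<le> \<mu> * (\<Sum>i<n. (f i)^2)"
  shows "Re z \<le> \<mu>"
proof -
  obtain x y where nz: "\<exists>i<n. x i \<noteq> 0 \<or> y i \<noteq> 0"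
    and eq: "Re z * (\<Sum>i<n. (x i)^2 + (y i)^2) = quad_sum n A x + quad_sum n A y"
    using eigenvalue_cplx_mat_Re_quad_sum[OF assms(1,2)] by blast
  define S where "S = (\<Sum>i<n. (x i)^2 + (y i)^2)"
  from nz obtain i where "i < n" "x i \<noteq> 0 \<or> y i \<noteq> 0" by blast
  then have "0 < (x i)^2 + (y i)^2" by (auto simp: add_pos_nonneg add_nonneg_pos)
  also have "\<dots> \<le> S" unfolding S_def using \<open>i < n\<close> by (intro member_le_sum) auto
  finally have "S > 0" .
  have "Re z * S \<le> \<mu> * S"
    using eq bound[of x] bound[of y] by (simp add: S_def sum.distrib distrib_left)
  with \<open>S > 0\<close> show ?thesis by simp
qed

definition J_family :: "real mat \<Rightarrow> real mat \<Rightarrow> real mat \<Rightarrow> real \<Rightarrow> real mat" where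
  "J_family M J2 J4 \<kappa> = M + \<kappa>^2 \<cdot>\<^sub>m J2 + \<kappa>^4 \<cdot>\<^sub>m J4"

lemma J_family_carrier:
  assumes "M \<in> carrier_mat n n" and "J2 \<in> carrier_mat n n" and "J4 \<in> carrier_mat n n"
  shows "J_family M J2 J4 \<kappa> \<in> carrier_mat n n"
  using assms by (simp add: J_family_def)

text \<open>Writing \<open>\<kappa>\<^sup>2 = u s\<close> with \<open>u \<ge> 1\<close>, the \<open>\<kappa>\<close>-dependent part of the form is
  \<open>u (s J2 + s\<^sup>2 J4) + u s (u s - s) J4\<close>: a multiple of the negative definite form plus a
  negative semidefinite one.\<close>
lemma quad_sum_J_family_le:
  assumes M: "M \<in> carrier_mat n n" and J2: "J2 \<in> carrier_mat n n" and J4: "J4 \<in> carrier_mat n n"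
    and nsd: "neg_semidef_mat n J4" and "s > 0" and "s \<le> \<kappa>^2"
    and c: "\<And>f. s * quad_sum n J2 f + s^2 * quad_sum n J4 f \<le> - c * (\<Sum>i<n. (f i)^2)"
  shows "quad_sum n (J_family M J2 J4 \<kappa>) f \<le>
    ((\<Sum>i<n. \<Sum>j<n. \<bar>M $$ (i,j)\<bar>) - \<kappa>^2 * c / s) * (\<Sum>i<n. (f i)^2)"
proof -
  define t where "t = \<kappa>^2"
  define u where "u = t / s"
  have "t = u * s" "u \<ge> 1" using \<open>s > 0\<close> \<open>s \<le> \<kappa>^2\<close> by (simp_all add: u_def t_def)
  then have "t * quad_sum n J2 f + t^2 * quad_sum n J4 f =
      u * (s * quad_sum n J2 f + s^2 * quad_sum n J4 f) + u * s * (u * s - s) * quad_sum n J4 f"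
    by (simp add: algebra_simps power2_eq_square)
  also have "\<dots> \<le> u * (- c * (\<Sum>i<n. (f i)^2)) + 0"
    using \<open>s > 0\<close> \<open>u \<ge> 1\<close> c quad_sum_nonpos_if_neg_semidef_mat[OF J4 nsd]
    by (intro add_mono mult_left_mono mult_nonneg_nonpos) auto
  finally have "t * quad_sum n J2 f + t^2 * quad_sum n J4 f \<le> - (t * c / s) * (\<Sum>i<n. (f i)^2)"
    by (simp add: u_def)
  moreover have "quad_sum n M f \<le> (\<Sum>i<n. \<Sum>j<n. \<bar>M $$ (i,j)\<bar>) * (\<Sum>i<n. (f i)^2)"
    by (rule quad_sum_le_abs_entries)
  moreover have "quad_sum n (J_family M J2 J4 \<kappa>) f =
      quad_sum n M f + t * quad_sum n J2 f + t^2 * quad_sum n J4 f"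
    using M J2 J4 by (simp add: J_family_def quad_sum_add quad_sum_smult t_def power_mult[symmetric])
  ultimately show ?thesis by (simp add: left_diff_distrib t_def)
qed

lemma eigenvalues_J_family_Re_neg_eventually:
  assumes M: "M \<in> carrier_mat n n" and J2: "J2 \<in> carrier_mat n n" and J4: "J4 \<in> carrier_mat n n"
    and "n \<ge> 1" and nsd: "neg_semidef_mat n J4" and nd: "neg_def_mat n (\<kappa>\<^sub>0^2 \<cdot>\<^sub>m J2 + \<kappa>\<^sub>0^4 \<cdot>\<^sub>m J4)"
  shows "\<exists>K. \<forall>\<kappa>\<ge>K. \<forall>z. eigenvalue (cplx_mat (J_family M J2 J4 \<kappa>)) z \<longrightarrow> Re z < 0"
proof -
  define s where "s = \<kappa>\<^sub>0^2"
  have N: "\<kappa>\<^sub>0^2 \<cdot>\<^sub>m J2 + \<kappa>\<^sub>0^4 \<cdot>\<^sub>m J4 \<in> carrier_mat n n" using J2 J4 by simp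
  obtain c where "c > 0" and c: "\<And>f. s * quad_sum n J2 f + s^2 * quad_sum n J4 f \<le> - c * (\<Sum>i<n. (f i)^2)"
    using neg_def_mat_uniform[OF N nd] J2 J4
    by (auto simp: quad_sum_add quad_sum_smult s_def power_mult[symmetric])
  have "s > 0"
  proof (rule ccontr)
    assume "\<not> s > 0"
    then have "s = 0" unfolding s_def by simp
    have "(\<Sum>i<n. (if i = 0 then 1 else 0 :: real)^2) = (\<Sum>i<n. if i = 0 then 1 else 0)"
      by (intro sum.cong) auto
    also have "\<dots> = 1" using \<open>n \<ge> 1\<close> by simp
    finally show False using c[of "\<lambda>i. if i = 0 then 1 else 0"] \<open>s = 0\<close> \<open>c > 0\<close> by simp
  qed
  define b where "b = (\<Sum>i<n. \<Sum>j<n. \<bar>M $$ (i,j)\<bar>)"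
  define K where "K = 1 + s + s * \<bar>b\<bar> / c"
  have "Re z < 0" if "\<kappa> \<ge> K" and ev: "eigenvalue (cplx_mat (J_family M J2 J4 \<kappa>)) z" for \<kappa> z
  proof -
    have "s * \<bar>b\<bar> / c \<ge> 0" using \<open>s > 0\<close> \<open>c > 0\<close> by simp
    then have "K \<ge> 1" unfolding K_def using \<open>s > 0\<close> by simp
    then have "\<kappa> * 1 \<le> \<kappa> * \<kappa>" using \<open>\<kappa> \<ge> K\<close> by (intro mult_left_mono) auto
    then have "\<kappa>^2 \<ge> K" using \<open>\<kappa> \<ge> K\<close> by (simp add: power2_eq_square)
    then have "\<kappa>^2 \<ge> s" and "\<kappa>^2 > s * \<bar>b\<bar> / c"
      using \<open>s * \<bar>b\<bar> / c \<ge> 0\<close> \<open>s > 0\<close> unfolding K_def by linarith+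
    then have "\<kappa>^2 * c > s * \<bar>b\<bar>" using \<open>c > 0\<close> by (simp add: pos_divide_less_eq)
    then have "\<kappa>^2 * c / s > \<bar>b\<bar>" using \<open>s > 0\<close> by (simp add: pos_less_divide_eq mult.commute)
    then have "\<kappa>^2 * c / s > b" by linarith
    have "quad_sum n (J_family M J2 J4 \<kappa>) f \<le> (b - \<kappa>^2 * c / s) * (\<Sum>i<n. (f i)^2)" for f
      unfolding b_def by (rule quad_sum_J_family_le[OF M J2 J4 nsd \<open>s > 0\<close> \<open>s \<le> \<kappa>^2\<close> c])
    with ev have "Re z \<le> b - \<kappa>^2 * c / s"
      by (intro eigenvalue_Re_le_if_quad_sum_le[OF J_family_carrier[OF M J2 J4]])
    with \<open>\<kappa>^2 * c / s > b\<close> show ?thesis by simp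
  qed
  then show ?thesis by blast
qed

section \<open>Characteristic polynomials and the spectral abscissa\<close>

lemma char_poly_cplx_mat:
  assumes "A \<in> carrier_mat n n"
  shows "char_poly (cplx_mat A) = map_poly complex_of_real (char_poly A)"
  unfolding cplx_mat_def by (rule of_real_hom.char_poly_hom[OF assms])

lemma eigenvalue_cplx_mat_iff:
  assumes "A \<in> carrier_mat n n"
  shows "eigenvalue (cplx_mat A) z \<longleftrightarrow> poly (map_poly complex_of_real (char_poly A)) z = 0"
proof -
  have "cplx_mat A \<in> carrier_mat n n" using assms by (simp add: cplx_mat_def)
  from eigenvalue_root_char_poly[OF this] show ?thesis unfolding char_poly_cplx_mat[OF assms] .
qed

lemma coeff_char_poly_0:
  assumes "(A :: 'a :: field mat) \<in> carrier_mat n n"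
  shows "coeff (char_poly A) 0 = det (- A)"
proof -
  have "char_matrix A 0 = A" using assms by (intro eq_matI) (auto simp: char_matrix_def)
  then show ?thesis using char_poly_matrix[OF assms, of 0] by (simp add: poly_0_coeff_0)
qed

lemma finite_eigenvalues_cplx_mat:
  assumes "A \<in> carrier_mat n n"
  shows "finite {z. eigenvalue (cplx_mat A) z}"
proof -
  have "char_poly A \<noteq> 0" using degree_monic_char_poly[OF assms] by auto
  then have "map_poly complex_of_real (char_poly A) \<noteq> 0" by simp
  from poly_roots_finite[OF this] show ?thesis unfolding eigenvalue_cplx_mat_iff[OF assms] .
qed

lemma ex_eigenvalue_cplx_mat:
  assumes "A \<in> carrier_mat n n" and "n \<ge> 1"
  shows "\<exists>z. eigenvalue (cplx_mat A) z"
proof -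
  have "degree (map_poly complex_of_real (char_poly A)) = n"
    using degree_monic_char_poly[OF assms(1)] by simp
  then have "\<not> constant (poly (map_poly complex_of_real (char_poly A)))"
    using assms(2) by (simp add: constant_degree)
  from fundamental_theorem_of_algebra[OF this] show ?thesis unfolding eigenvalue_cplx_mat_iff[OF assms(1)] .
qed

lemma Re_le_spectral_abscissa:
  assumes "A \<in> carrier_mat n n" and "eigenvalue (cplx_mat A) z"
  shows "Re z \<le> spectral_abscissa A"
  unfolding spectral_abscissa_def using finite_eigenvalues_cplx_mat[OF assms(1)] assms(2) by simp

lemma spectral_abscissa_neg:
  assumes "A \<in> carrier_mat n n" and "n \<ge> 1" and "\<And>z. eigenvalue (cplx_mat A) z \<Longrightarrow> Re z < 0"
  shows "spectral_abscissa A < 0"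
proof -
  let ?S = "Re ` {z. eigenvalue (cplx_mat A) z}"
  have "finite ?S" and "?S \<noteq> {}"
    using finite_eigenvalues_cplx_mat[OF assms(1)] ex_eigenvalue_cplx_mat[OF assms(1,2)] by auto
  then have "Max ?S \<in> ?S" by (rule Max_in)
  then show ?thesis unfolding spectral_abscissa_def using assms(3) by auto
qed

text \<open>The characteristic polynomial is monic, so \<open>det (- A) < 0\<close> forces a positive real root.\<close>
lemma spectral_abscissa_pos_if_det_neg:
  assumes A: "(A :: real mat) \<in> carrier_mat n n" and "det (- A) < 0"
  shows "spectral_abscissa A > 0"
proof -
  have "lead_coeff (char_poly A) = 1" using degree_monic_char_poly[OF A] by simp
  then obtain N where N: "\<And>x. x \<ge> N \<Longrightarrow> poly (char_poly A) x \<ge> 1"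
    using poly_pinfty_gt_lc[of "char_poly A"] by auto
  have "poly (char_poly A) 0 < 0" using assms(2) coeff_char_poly_0[OF A] by (simp add: poly_0_coeff_0)
  moreover have "poly (char_poly A) (max N 1) > 0" using N[of "max N 1"] by simp
  ultimately obtain t where "t > 0" and "poly (char_poly A) t = 0"
    using poly_IVT_pos[of 0 "max N 1" "char_poly A"] by force
  then have "eigenvalue (cplx_mat A) (of_real t)"
    unfolding eigenvalue_cplx_mat_iff[OF A] of_real_hom.poly_map_poly by simp
  from Re_le_spectral_abscissa[OF A this] \<open>t > 0\<close> show ?thesis by simp
qed

lemma order_prod_list_linear:
  fixes as :: "'a::idom list"
  shows "order k (\<Prod>a\<leftarrow>as. [:- a, 1:]) = count (mset as) k"
proof (induction as)
  case Nil
  show ?case by simp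
next
  case (Cons a as)
  have "(\<Prod>a\<leftarrow>as. [:- a, 1:]) \<noteq> 0" by (auto simp: prod_list_zero_iff)
  then have "order k ([:- a, 1:] * (\<Prod>a\<leftarrow>as. [:- a, 1:])) =
      order k [:- a, 1:] + order k (\<Prod>a\<leftarrow>as. [:- a, 1:])"
    by (intro order_mult no_zero_divisors) simp_all
  then show ?case using Cons by (simp add: order_linear')
qed

lemma poly_prod_list_linear_eq_0_iff:
  fixes as :: "'a::idom list"
  shows "poly (\<Prod>a\<leftarrow>as. [:- a, 1:]) k = 0 \<longleftrightarrow> k \<in> set as"
  by (induction as) auto

lemma sum_count_eq_length_filter:
  "(\<Sum>k\<in>{k. k \<in> set xs \<and> P k}. count (mset xs) k) = length (filter P xs)"
proof -
  let ?X = "filter_mset P (mset xs)"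
  have "length (filter P xs) = size ?X" by (simp flip: mset_filter)
  also have "\<dots> = sum (count ?X) (set_mset ?X)" by (rule size_multiset_overloaded_eq)
  also have "\<dots> = (\<Sum>k\<in>{k. k \<in> set xs \<and> P k}. count (mset xs) k)"
    by (intro sum.cong) auto
  finally show ?thesis ..
qed

text \<open>Only one of the \<open>n\<close> roots lies outside the open left half plane, and \<open>0\<close> is a root,
  so \<open>0\<close> is that root and it is simple.\<close>
lemma char_poly_simple_zero_root:
  assumes M: "M \<in> carrier_mat n n" and "n \<ge> 1" and "det M = 0" and "num_neg_eigs M = n - 1"
  shows "\<forall>z. poly (map_poly complex_of_real (char_poly M)) z = 0 \<longrightarrow> Re z \<ge> 0 \<longrightarrow> z = 0"
    and "coeff (char_poly M) 1 \<noteq> 0"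
proof -
  define p where "p = char_poly (cplx_mat M)"
  have p: "p = map_poly complex_of_real (char_poly M)" unfolding p_def by (rule char_poly_cplx_mat[OF M])
  have cM: "cplx_mat M \<in> carrier_mat n n" using M by (simp add: cplx_mat_def)
  obtain as where as: "p = (\<Prod>a\<leftarrow>as. [:- a, 1:])" and "length as = n"
    using char_poly_factorized[OF cM] unfolding p_def by blast
  have roots: "poly p z = 0 \<longleftrightarrow> z \<in> set as" for z
    unfolding as by (rule poly_prod_list_linear_eq_0_iff)
  have "num_neg_eigs M = (\<Sum>k\<in>{k. k \<in> set as \<and> Re k < 0}. count (mset as) k)"
    unfolding num_neg_eigs_def p_def[symmetric] roots unfolding as order_prod_list_linear ..
  then have "length (filter (\<lambda>k. Re k < 0) as) = n - 1"
    using assms(4) by (simp add: sum_count_eq_length_filter)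
  then have "length (filter (\<lambda>k. \<not> Re k < 0) as) = 1"
    using sum_length_filter_compl[of "\<lambda>k. Re k < 0" as] \<open>length as = n\<close> \<open>n \<ge> 1\<close> by simp
  then obtain w where w: "filter (\<lambda>k. \<not> Re k < 0) as = [w]" by (auto simp: length_Suc_conv)
  have "poly (char_poly M) 0 = 0"
    using assms(3) det_0_negate[OF M] coeff_char_poly_0[OF M] by (simp add: poly_0_coeff_0)
  then have "poly p 0 = 0" unfolding p by (simp add: poly_0_coeff_0)
  then have "0 \<in> set (filter (\<lambda>k. \<not> Re k < 0) as)" using roots by simp
  then have "w = 0" unfolding w by simp
  show "\<forall>z. poly (map_poly complex_of_real (char_poly M)) z = 0 \<longrightarrow> Re z \<ge> 0 \<longrightarrow> z = 0"
  proof (intro allI impI)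
    fix z assume "poly (map_poly complex_of_real (char_poly M)) z = 0" and "Re z \<ge> 0"
    then have "z \<in> set (filter (\<lambda>k. \<not> Re k < 0) as)" using roots p by simp
    then show "z = 0" unfolding w \<open>w = 0\<close> by simp
  qed
  have "order 0 p = count (mset (filter (\<lambda>k. \<not> Re k < 0) as)) 0"
    unfolding as order_prod_list_linear by (simp add: mset_filter)
  also have "\<dots> = 1" unfolding w \<open>w = 0\<close> by simp
  finally have "order 0 p = 1" .
  have "p \<noteq> 0" and "degree p = n" unfolding p_def using degree_monic_char_poly[OF cM] by auto
  then have "pderiv p \<noteq> 0" using \<open>n \<ge> 1\<close> by (auto simp: pderiv_eq_0_iff)
  have "order 0 p = Suc (order 0 (pderiv p))" by (rule order_pderiv[OF \<open>p \<noteq> 0\<close> \<open>poly p 0 = 0\<close>])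
  with \<open>order 0 p = 1\<close> have "order 0 (pderiv p) = 0" by simp
  then have "poly (pderiv p) 0 \<noteq> 0" using \<open>pderiv p \<noteq> 0\<close> order_root by blast
  then show "coeff (char_poly M) 1 \<noteq> 0" unfolding p by (simp add: poly_0_coeff_0 coeff_pderiv)
qed

text \<open>A negative slope at \<open>0\<close> together with the positive leading coefficient would produce a
  positive root by the intermediate value theorem.\<close>
lemma coeff_1_pos_if_no_positive_roots:
  fixes p :: "real poly"
  assumes "lead_coeff p > 0" and "poly p 0 = 0" and "coeff p 1 \<noteq> 0"
    and no_pos: "\<And>x. x > 0 \<Longrightarrow> poly p x \<noteq> 0"
  shows "coeff p 1 > 0"
proof (rule ccontr)
  assume "\<not> ?thesis"
  with assms(3) have "coeff p 1 < 0" by simp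
  moreover have "DERIV (poly p) 0 :> coeff p 1"
    using poly_DERIV[of p 0] by (simp add: poly_0_coeff_0 coeff_pderiv)
  ultimately obtain d where "d > 0" and "\<And>h. 0 < h \<Longrightarrow> h < d \<Longrightarrow> poly p (0 + h) < poly p 0"
    using DERIV_neg_dec_right by blast
  then have neg: "poly p (d / 2) < 0" using assms(2) by simp
  obtain N where N: "\<And>x. x \<ge> N \<Longrightarrow> poly p x \<ge> lead_coeff p"
    using poly_pinfty_gt_lc[OF assms(1)] by auto
  have "poly p (max N d) > 0" using N[of "max N d"] assms(1) by simp
  with neg obtain x where "d / 2 < x" and "poly p x = 0"
    using poly_IVT_pos[of "d / 2" "max N d" p] \<open>d > 0\<close> by force
  with no_pos \<open>d > 0\<close> show False by (metis half_gt_zero order_less_trans)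
qed

lemma poly_eval_comm_ring_hom: "comm_ring_hom (\<lambda>q::real poly. poly q x)"
  by unfold_locales (auto simp: poly_mult)

definition J_family_poly_mat :: "nat \<Rightarrow> real mat \<Rightarrow> real mat \<Rightarrow> real mat \<Rightarrow> real poly mat" where
  "J_family_poly_mat n M J2 J4 = mat n n (\<lambda>(i,j). [:M $$ (i,j), 0, J2 $$ (i,j), 0, J4 $$ (i,j):])"

lemma coeff_char_poly_J_family:
  assumes "M \<in> carrier_mat n n" and "J2 \<in> carrier_mat n n" and "J4 \<in> carrier_mat n n"
  shows "coeff (char_poly (J_family M J2 J4 \<kappa>)) i = poly (coeff (char_poly (J_family_poly_mat n M J2 J4)) i) \<kappa>"
proof -
  have "map_mat (\<lambda>q. poly q \<kappa>) (J_family_poly_mat n M J2 J4) = J_family M J2 J4 \<kappa>"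
    using assms by (intro eq_matI)
      (auto simp: J_family_poly_mat_def J_family_def algebra_simps power2_eq_square power4_eq_xxxx)
  moreover have "J_family_poly_mat n M J2 J4 \<in> carrier_mat n n" by (simp add: J_family_poly_mat_def)
  ultimately have "char_poly (J_family M J2 J4 \<kappa>) =
      map_poly (\<lambda>q. poly q \<kappa>) (char_poly (J_family_poly_mat n M J2 J4))"
    by (metis comm_ring_hom.char_poly_hom[OF poly_eval_comm_ring_hom])
  then show ?thesis by (simp add: coeff_map_poly)
qed

lemma det_neg_J_family_poly:
  assumes "M \<in> carrier_mat n n" and "J2 \<in> carrier_mat n n" and "J4 \<in> carrier_mat n n"
  shows "\<exists>q. (\<lambda>\<kappa>. det (- J_family M J2 J4 \<kappa>)) = poly q"
  using coeff_char_poly_0[OF J_family_carrier[OF assms]] coeff_char_poly_J_family[OF assms]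
  by (intro exI[of _ "coeff (char_poly (J_family_poly_mat n M J2 J4)) 0"]) auto

lemma spectral_abscissa_J_family_neg_near_0:
  assumes M: "M \<in> carrier_mat n n" and J2: "J2 \<in> carrier_mat n n" and J4: "J4 \<in> carrier_mat n n"
    and "n \<ge> 1" and "det M = 0" and "num_neg_eigs M = n - 1"
    and pos: "initially_positive (\<lambda>\<kappa>. det (- J_family M J2 J4 \<kappa>))"
  shows "\<exists>\<epsilon>>0. \<forall>\<kappa>. 0 < \<kappa> \<and> \<kappa> < \<epsilon> \<longrightarrow> spectral_abscissa (J_family M J2 J4 \<kappa>) < 0"
proof -
  define P where "P \<kappa> = char_poly (J_family M J2 J4 \<kappa>)" for \<kappa>
  note JC = J_family_carrier[OF M J2 J4]
  have deg: "degree (P \<kappa>) = n" and monic: "lead_coeff (P \<kappa>) = 1" for \<kappa>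
    unfolding P_def using degree_monic_char_poly[OF JC] by auto
  have cont: "isCont (\<lambda>\<kappa>. coeff (P \<kappa>) i) 0" for i
    unfolding P_def coeff_char_poly_J_family[OF M J2 J4] by simp
  have "J_family M J2 J4 0 = M" using M J2 J4 by (intro eq_matI) (auto simp: J_family_def)
  then have P0: "P 0 = char_poly M" by (simp add: P_def)
  note roots0 = char_poly_simple_zero_root(1)[OF M assms(4-6)]
  have "coeff (P 0) 1 > 0" unfolding P0
  proof (rule coeff_1_pos_if_no_positive_roots)
    show "lead_coeff (char_poly M) > 0" using degree_monic_char_poly[OF M] by simp
    show "poly (char_poly M) 0 = 0"
      using assms(5) det_0_negate[OF M] coeff_char_poly_0[OF M] by (simp add: poly_0_coeff_0)
    show "coeff (char_poly M) 1 \<noteq> 0" by (rule char_poly_simple_zero_root(2)[OF M assms(4-6)])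
    show "poly (char_poly M) x \<noteq> 0" if "x > 0" for x
      using roots0[rule_format, of "of_real x"] that by (auto simp: of_real_hom.poly_map_poly)
  qed
  moreover have "initially_positive (\<lambda>\<kappa>. coeff (P \<kappa>) 0)"
    using pos unfolding P_def coeff_char_poly_0[OF JC] .
  ultimately obtain \<epsilon> where "\<epsilon> > 0"
    and \<epsilon>: "\<And>\<kappa> z. 0 < \<kappa> \<Longrightarrow> \<kappa> < \<epsilon> \<Longrightarrow> poly (map_poly of_real (P \<kappa>)) z = 0 \<Longrightarrow> Re z < 0"
    using roots_in_left_half_plane_near_0[OF deg monic cont] roots0 unfolding P0 by blast
  have "spectral_abscissa (J_family M J2 J4 \<kappa>) < 0" if "0 < \<kappa>" "\<kappa> < \<epsilon>" for \<kappa>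
    using \<epsilon>[OF that] by (intro spectral_abscissa_neg[OF JC \<open>n \<ge> 1\<close>]) (simp add: eigenvalue_cplx_mat_iff[OF JC] P_def)
  with \<open>\<epsilon> > 0\<close> show ?thesis by blast
qed

lemma spectral_abscissa_J_family_neg_eventually:
  assumes M: "M \<in> carrier_mat n n" and J2: "J2 \<in> carrier_mat n n" and J4: "J4 \<in> carrier_mat n n"
    and "n \<ge> 1" and "neg_semidef_mat n J4" and "neg_def_mat n (\<kappa>\<^sub>0^2 \<cdot>\<^sub>m J2 + \<kappa>\<^sub>0^4 \<cdot>\<^sub>m J4)"
  shows "\<exists>K. \<forall>\<kappa>\<ge>K. spectral_abscissa (J_family M J2 J4 \<kappa>) < 0"
proof -
  obtain K where "\<And>\<kappa> z. \<kappa> \<ge> K \<Longrightarrow> eigenvalue (cplx_mat (J_family M J2 J4 \<kappa>)) z \<Longrightarrow> Re z < 0"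
    using eigenvalues_J_family_Re_neg_eventually[OF assms] by blast
  then show ?thesis
    using spectral_abscissa_neg[OF J_family_carrier[OF M J2 J4] \<open>n \<ge> 1\<close>] by blast
qed

lemma microphase_sep_J_family:
  assumes M: "M \<in> carrier_mat n n" and J2: "J2 \<in> carrier_mat n n" and J4: "J4 \<in> carrier_mat n n"
    and "n \<ge> 1" and "det M = 0" and "num_neg_eigs M = n - 1"
    and "neg_semidef_mat n J4" and "neg_def_mat n (\<kappa>\<^sub>0^2 \<cdot>\<^sub>m J2 + \<kappa>\<^sub>0^4 \<cdot>\<^sub>m J4)"
    and "initially_positive (\<lambda>\<kappa>. det (- J_family M J2 J4 \<kappa>))"
    and "\<kappa>\<^sub>2 > 0" and "det (- J_family M J2 J4 \<kappa>\<^sub>2) < 0"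
  shows "microphase_sep (\<lambda>\<kappa>. spectral_abscissa (J_family M J2 J4 \<kappa>))"
proof -
  obtain \<epsilon> where "\<epsilon> > 0" and small: "\<forall>\<kappa>. 0 < \<kappa> \<and> \<kappa> < \<epsilon> \<longrightarrow> spectral_abscissa (J_family M J2 J4 \<kappa>) < 0"
    using spectral_abscissa_J_family_neg_near_0[OF M J2 J4 assms(4-6,9)] by blast
  obtain K where large: "\<forall>\<kappa>\<ge>K. spectral_abscissa (J_family M J2 J4 \<kappa>) < 0"
    using spectral_abscissa_J_family_neg_eventually[OF M J2 J4 assms(4,7,8)] by blast
  have "spectral_abscissa (J_family M J2 J4 \<kappa>\<^sub>2) > 0"
    by (rule spectral_abscissa_pos_if_det_neg[OF J_family_carrier[OF M J2 J4] assms(11)])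
  moreover have "0 < min \<epsilon> (\<kappa>\<^sub>2 / 2)" and "min \<epsilon> (\<kappa>\<^sub>2 / 2) < \<kappa>\<^sub>2" and "\<kappa>\<^sub>2 < max K (\<kappa>\<^sub>2 + 1)"
    using \<open>\<epsilon> > 0\<close> \<open>\<kappa>\<^sub>2 > 0\<close> by auto
  ultimately show ?thesis unfolding microphase_sep_def using small large
    by (intro exI[of _ "min \<epsilon> (\<kappa>\<^sub>2 / 2)"] conjI exI[of _ "\<kappa>\<^sub>2"] exI[of _ "max K (\<kappa>\<^sub>2 + 1)"]) auto
qed

section \<open>Dependence on the diagonal matrix\<close>

lemma det_identity_plus_column:
  fixes c :: "nat \<Rightarrow> 'a::comm_ring_1"
  assumes "p < n"
  shows "det (mat n n (\<lambda>(i,j). if i = j then 1 else if j = p then c i else 0)) = 1"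
proof -
  define E where "E = mat n n (\<lambda>(i,j). if i = j then 1 else if j = p then c i else (0::'a))"
  have E: "E \<in> carrier_mat n n" by (simp add: E_def)
  have "det E = (\<Sum>j<n. E $$ (p,j) * cofactor E p j)" by (rule laplace_expansion_row[OF E assms])
  also have "\<dots> = (\<Sum>j<n. if j = p then cofactor E p j else 0)"
    using assms by (intro sum.cong) (auto simp: E_def)
  also have "\<dots> = det (mat_delete E p p)" using assms by (simp add: cofactor_def flip: mult_2)
  also have "mat_delete E p p = 1\<^sub>m (n - 1)"
    using assms by (intro eq_matI) (auto simp: mat_delete_def E_def insert_index_def)
  finally show ?thesis by (simp add: E_def)
qed

lemma det_affine_in_row:
  fixes Y :: "'a::comm_ring_1 \<Rightarrow> 'a mat"
  assumes Y: "\<And>t. Y t \<in> carrier_mat n n" and "p < n"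
    and rows: "\<And>t i k. i < n \<Longrightarrow> k < n \<Longrightarrow> i \<noteq> p \<Longrightarrow> Y t $$ (i,k) = Y 0 $$ (i,k)"
    and row_p: "\<And>t k. k < n \<Longrightarrow> Y t $$ (p,k) = a k + t * b k"
  shows "\<exists>\<alpha> \<beta>. \<forall>t. det (Y t) = \<alpha> + t * \<beta>"
proof -
  have cofactor_Y: "cofactor (Y t) p k = cofactor (Y 0) p k" for t k
  proof -
    have "mat_delete (Y t) p k = mat_delete (Y 0) p k"
    proof (rule eq_matI)
      fix i j assume "i < dim_row (mat_delete (Y 0) p k)" and "j < dim_col (mat_delete (Y 0) p k)"
      then have "i < n - 1" and "j < n - 1" using Y[of 0] by simp_all
      then have r: "(if i < p then i else Suc i) < n" "(if i < p then i else Suc i) \<noteq> p"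
        and c: "(if j < k then j else Suc j) < n"
        by auto
      from rows[OF r(1) c r(2), where t = t] \<open>i < n - 1\<close> \<open>j < n - 1\<close> Y[of t] Y[of 0]
      show "mat_delete (Y t) p k $$ (i,j) = mat_delete (Y 0) p k $$ (i,j)"
        by (simp add: mat_delete_def)
    qed (use Y[of t] Y[of 0] in simp_all)
    then show ?thesis by (simp add: cofactor_def)
  qed
  have "det (Y t) = (\<Sum>k<n. a k * cofactor (Y 0) p k) + t * (\<Sum>k<n. b k * cofactor (Y 0) p k)" for t
  proof -
    have "det (Y t) = (\<Sum>k<n. Y t $$ (p,k) * cofactor (Y t) p k)"
      by (rule laplace_expansion_row[OF Y \<open>p < n\<close>])
    also have "\<dots> = (\<Sum>k<n. a k * cofactor (Y 0) p k + t * (b k * cofactor (Y 0) p k))"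
      by (intro sum.cong) (simp_all add: row_p cofactor_Y[where t = t] algebra_simps)
    finally show ?thesis by (simp add: sum.distrib sum_distrib_left)
  qed
  then show ?thesis by blast
qed

text \<open>If \<open>u p \<noteq> 0\<close>, subtracting \<open>u i / u p\<close> times row \<open>p\<close> from every other row \<open>i\<close>
  confines the dependence on \<open>t\<close> to row \<open>p\<close>.\<close>
lemma det_rank_one_update_affine:
  fixes A :: "'a::field mat"
  assumes A: "A \<in> carrier_mat n n"
  shows "\<exists>\<alpha> \<beta>. \<forall>t. det (mat n n (\<lambda>(i,k). A $$ (i,k) + t * u i * w k)) = \<alpha> + t * \<beta>"
proof (cases "\<exists>p<n. u p \<noteq> 0")
  case False
  then have "mat n n (\<lambda>(i,k). A $$ (i,k) + t * u i * w k) = A" for t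
    using A by (intro eq_matI) auto
  then show ?thesis by (intro exI[of _ "det A"] exI[of _ 0]) simp
next
  case True
  then obtain p where p: "p < n" "u p \<noteq> 0" by blast
  define E where "E = mat n n (\<lambda>(i,j). if i = j then 1 else if j = p then u i / u p else 0)"
  define Y where "Y t = mat n n (\<lambda>(i,k). if i = p then A $$ (p,k) + t * u p * w k
      else A $$ (i,k) - u i / u p * A $$ (p,k))" for t
  have E: "E \<in> carrier_mat n n" and Y: "Y t \<in> carrier_mat n n" for t by (simp_all add: E_def Y_def)
  have XEY: "mat n n (\<lambda>(i,k). A $$ (i,k) + t * u i * w k) = E * Y t" for t
  proof (rule eq_matI)
    fix i k assume "i < dim_row (E * Y t)" and "k < dim_col (E * Y t)"
    then have i: "i < n" and k: "k < n" using E Y[of t] by auto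
    have "(E * Y t) $$ (i,k) = (\<Sum>j<n. E $$ (i,j) * Y t $$ (j,k))"
      by (rule index_mult_mat_sum[OF E Y i k])
    also have "\<dots> = (\<Sum>j<n. (if j = i then Y t $$ (i,k) else 0) +
        (if j = p then (if i = p then 0 else u i / u p * Y t $$ (p,k)) else 0))"
      using i by (intro sum.cong) (auto simp: E_def)
    also have "\<dots> = Y t $$ (i,k) + (if i = p then 0 else u i / u p * Y t $$ (p,k))"
      unfolding sum.distrib using i p by simp
    also have "\<dots> = A $$ (i,k) + t * u i * w k"
      using i k p by (auto simp: Y_def field_simps)
    finally show "mat n n (\<lambda>(i,k). A $$ (i,k) + t * u i * w k) $$ (i,k) = (E * Y t) $$ (i,k)"
      using i k by simp
  qed (simp_all add: E_def Y_def)
  have "det E = 1" unfolding E_def by (rule det_identity_plus_column[OF p(1)])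
  moreover have "\<exists>\<alpha> \<beta>. \<forall>t. det (Y t) = \<alpha> + t * \<beta>"
    by (rule det_affine_in_row[OF Y p(1), where a = "\<lambda>k. A $$ (p,k)" and b = "\<lambda>k. u p * w k"])
      (simp_all add: Y_def p(1))
  ultimately show ?thesis unfolding XEY det_mult[OF E Y] by simp
qed

text \<open>Moving one coordinate at a time to the endpoint in the direction of the slope never
  decreases a function that is affine in each coordinate.\<close>
lemma multiaffine_max_at_vertex:
  fixes g :: "(nat \<Rightarrow> real) \<Rightarrow> real"
  assumes aff: "\<And>d j. j < m \<Longrightarrow> \<exists>\<alpha> \<beta>. \<forall>x. g (d(j := x)) = \<alpha> + x * \<beta>"
    and box: "\<forall>j<m. lo j \<le> d j \<and> d j \<le> hi j"
  shows "\<exists>v. (\<forall>j<m. v j \<in> {lo j, hi j}) \<and> g d \<le> g v"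
proof -
  have "\<exists>v. (\<forall>j<m. lo j \<le> v j \<and> v j \<le> hi j) \<and> (\<forall>j<k. v j \<in> {lo j, hi j}) \<and> g d \<le> g v"
    if "k \<le> m" for k
    using that
  proof (induction k)
    case 0
    show ?case using box by (intro exI[of _ d]) auto
  next
    case (Suc k)
    then obtain v where v: "\<forall>j<m. lo j \<le> v j \<and> v j \<le> hi j" "\<forall>j<k. v j \<in> {lo j, hi j}" "g d \<le> g v"
      by auto
    have "k < m" using Suc.prems by simp
    obtain \<alpha> \<beta> where ab: "\<And>x. g (v(k := x)) = \<alpha> + x * \<beta>" using aff[OF \<open>k < m\<close>, of v] by blast
    define e where "e = (if \<beta> \<ge> 0 then hi k else lo k)"
    have "\<alpha> + v k * \<beta> \<le> \<alpha> + e * \<beta>"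
      using v(1) \<open>k < m\<close> unfolding e_def by (auto intro: mult_right_mono mult_right_mono_neg)
    then have "g v \<le> g (v(k := e))" using ab[of "v k"] ab[of e] by simp
    have "\<forall>j<m. lo j \<le> (v(k := e)) j \<and> (v(k := e)) j \<le> hi j"
      using v(1) \<open>k < m\<close> unfolding e_def by auto
    moreover have "\<forall>j<Suc k. (v(k := e)) j \<in> {lo j, hi j}"
      using v(2) unfolding e_def by (auto simp: less_Suc_eq)
    moreover have "g d \<le> g (v(k := e))" using \<open>g d \<le> g v\<close> \<open>g v \<le> g (v(k := e))\<close> by linarith
    ultimately show ?case by blast
  qed
  from this[of m] show ?thesis by auto
qed

lemma multiaffine_min_at_vertex:
  fixes g :: "(nat \<Rightarrow> real) \<Rightarrow> real"
  assumes aff: "\<And>d j. j < m \<Longrightarrow> \<exists>\<alpha> \<beta>. \<forall>x. g (d(j := x)) = \<alpha> + x * \<beta>"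
    and box: "\<forall>j<m. lo j \<le> d j \<and> d j \<le> hi j"
  shows "\<exists>v. (\<forall>j<m. v j \<in> {lo j, hi j}) \<and> g v \<le> g d"
proof -
  have "\<exists>\<alpha> \<beta>. \<forall>x. - g (d(j := x)) = \<alpha> + x * \<beta>" if j: "j < m" for d j
  proof -
    obtain \<alpha> \<beta> where "\<forall>x. g (d(j := x)) = \<alpha> + x * \<beta>" using aff[OF j] by blast
    then show ?thesis by (intro exI[of _ "- \<alpha>"] exI[of _ "- \<beta>"]) simp
  qed
  from multiaffine_max_at_vertex[of m "\<lambda>d. - g d", OF this box] show ?thesis by auto
qed

lemma poly_initially_positive_or_nonpos:
  fixes q :: "real poly"
  shows "initially_positive (poly q) \<or> (\<exists>\<epsilon>>0. \<forall>\<kappa>. 0 < \<kappa> \<and> \<kappa> < \<epsilon> \<longrightarrow> poly q \<kappa> \<le> 0)"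
proof (cases "q = 0")
  case True
  then show ?thesis by (intro disjI2 exI[of _ 1]) auto
next
  case False
  define R where "R = {x. poly q x = 0 \<and> x > 0}"
  have "finite R" unfolding R_def using poly_roots_finite[OF False] by (rule rev_finite_subset) auto
  define \<epsilon> where "\<epsilon> = (if R = {} then 1 else Min R)"
  have "\<epsilon> > 0" using \<open>finite R\<close> by (auto simp: \<epsilon>_def R_def)
  have no_root: "poly q x \<noteq> 0" if "0 < x" "x < \<epsilon>" for x
    using that \<open>finite R\<close> Min_le[of R x] by (auto simp: \<epsilon>_def R_def split: if_splits)
  have no_switch: "poly q a * poly q b \<ge> 0" if "0 < a" "a < b" "b < \<epsilon>" for a b
  proof (rule ccontr)
    assume "\<not> ?thesis"
    then have "poly q a * poly q b < 0" by simp
    from poly_IVT[OF \<open>a < b\<close> this] obtain x where "a < x" "x < b" "poly q x = 0" by blast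
    with no_root[of x] that show False by auto
  qed
  have same_sign: "poly q x * poly q (\<epsilon> / 2) \<ge> 0" if "0 < x" "x < \<epsilon>" for x
    using no_switch[of x "\<epsilon> / 2"] no_switch[of "\<epsilon> / 2" x] that \<open>\<epsilon> > 0\<close>
    by (cases x "\<epsilon> / 2" rule: linorder_cases) (auto simp: mult.commute)
  show ?thesis
  proof (cases "poly q (\<epsilon> / 2) > 0")
    case True
    then have "poly q x > 0" if "0 < x" "x < \<epsilon>" for x
      using same_sign[OF that] no_root[OF that] by (auto simp: zero_le_mult_iff)
    then show ?thesis unfolding initially_positive_def using \<open>\<epsilon> > 0\<close> by blast
  next
    case False
    then have "poly q x \<le> 0" if "0 < x" "x < \<epsilon>" for x
      using same_sign[OF that] no_root[of "\<epsilon> / 2"] \<open>\<epsilon> > 0\<close> by (auto simp: zero_le_mult_iff)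
    then show ?thesis using \<open>\<epsilon> > 0\<close> by blast
  qed
qed

lemma bdd_below_image_if_dominated_by_finite:
  assumes "finite V" and "\<And>x. x \<in> S \<Longrightarrow> \<exists>v\<in>V. g v \<le> (g x :: real)"
  shows "bdd_below (g ` S)"
proof (rule bdd_belowI)
  fix y assume "y \<in> g ` S"
  then obtain v where "v \<in> V" "g v \<le> y" using assms(2) by blast
  moreover have "Min (g ` V) \<le> g v" using \<open>finite V\<close> \<open>v \<in> V\<close> by simp
  ultimately show "Min (g ` V) \<le> y" by simp
qed

lemma bdd_above_image_if_dominated_by_finite:
  assumes "finite V" and "\<And>x. x \<in> S \<Longrightarrow> \<exists>v\<in>V. (g x :: real) \<le> g v"
  shows "bdd_above (g ` S)"
proof (rule bdd_aboveI)
  fix y assume "y \<in> g ` S"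
  then obtain v where "v \<in> V" "y \<le> g v" using assms(2) by blast
  moreover have "g v \<le> Max (g ` V)" using \<open>finite V\<close> \<open>v \<in> V\<close> by simp
  ultimately show "y \<le> Max (g ` V)" by simp
qed

lemma initially_positive_member_if_Inf:
  fixes f :: "'a \<Rightarrow> real \<Rightarrow> real"
  assumes "finite V" and below: "\<forall>x\<in>S. \<forall>\<kappa>. \<exists>v\<in>V. f v \<kappa> \<le> f x \<kappa>" and "S \<noteq> {}"
    and pos: "initially_positive (\<lambda>\<kappa>. Inf ((\<lambda>x. f x \<kappa>) ` S))"
    and change: "neg_sign_change (\<lambda>\<kappa>. Inf ((\<lambda>x. f x \<kappa>) ` S))"
  shows "\<exists>x\<in>S. initially_positive (f x) \<and> (\<exists>\<kappa>>0. f x \<kappa> < 0)"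
proof -
  have bdd: "bdd_below ((\<lambda>x. f x \<kappa>) ` S)" for \<kappa>
    using below by (intro bdd_below_image_if_dominated_by_finite[OF \<open>finite V\<close>]) blast
  obtain \<kappa>\<^sub>1 \<kappa>\<^sub>2 where "0 \<le> \<kappa>\<^sub>1" "\<kappa>\<^sub>1 < \<kappa>\<^sub>2" and "Inf ((\<lambda>x. f x \<kappa>\<^sub>2) ` S) < 0"
    using change unfolding neg_sign_change_def by blast
  then obtain x where "x \<in> S" and "f x \<kappa>\<^sub>2 < 0"
    using cInf_lessD[of "(\<lambda>x. f x \<kappa>\<^sub>2) ` S"] \<open>S \<noteq> {}\<close> by blast
  moreover have "initially_positive (f x)"
  proof -
    obtain k0 where "k0 > 0" and k0: "\<And>\<kappa>. 0 < \<kappa> \<Longrightarrow> \<kappa> < k0 \<Longrightarrow> Inf ((\<lambda>x. f x \<kappa>) ` S) > 0"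
      using pos unfolding initially_positive_def by blast
    have "Inf ((\<lambda>x. f x \<kappa>) ` S) \<le> f x \<kappa>" for \<kappa>
      using cInf_lower[OF imageI[OF \<open>x \<in> S\<close>] bdd] .
    with k0 \<open>k0 > 0\<close> show ?thesis unfolding initially_positive_def by (meson order_less_le_trans)
  qed
  moreover have "\<kappa>\<^sub>2 > 0" using \<open>0 \<le> \<kappa>\<^sub>1\<close> \<open>\<kappa>\<^sub>1 < \<kappa>\<^sub>2\<close> by simp
  ultimately show ?thesis by blast
qed

text \<open>Each \<open>f v\<close> has a constant sign on some interval \<open>(0, \<epsilon>)\<close>; if none of them were
  positive there, none would be positive on the shortest such interval.\<close>
lemma ex_initially_positive_poly_member:
  fixes f :: "'a \<Rightarrow> real \<Rightarrow> real"
  assumes "finite V" and polys: "\<forall>v\<in>V. \<exists>q. f v = poly q"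
    and "k0 > 0" and pos: "\<And>\<kappa>. 0 < \<kappa> \<Longrightarrow> \<kappa> < k0 \<Longrightarrow> \<exists>v\<in>V. f v \<kappa> > 0"
  shows "\<exists>v\<in>V. initially_positive (f v)"
proof (rule ccontr)
  assume none: "\<not> (\<exists>v\<in>V. initially_positive (f v))"
  have "V \<noteq> {}" using pos[of "k0 / 2"] \<open>k0 > 0\<close> by auto
  have "\<exists>\<epsilon>>0. \<forall>\<kappa>. 0 < \<kappa> \<and> \<kappa> < \<epsilon> \<longrightarrow> f v \<kappa> \<le> 0" if v: "v \<in> V" for v
  proof -
    obtain q where "f v = poly q" using polys v by blast
    with poly_initially_positive_or_nonpos[of q] none v show ?thesis by auto
  qed
  then have "\<exists>ep. \<forall>v\<in>V. ep v > 0 \<and> (\<forall>\<kappa>. 0 < \<kappa> \<and> \<kappa> < ep v \<longrightarrow> f v \<kappa> \<le> 0)"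
    by (intro bchoice) blast
  then obtain ep where ep_pos: "\<And>v. v \<in> V \<Longrightarrow> ep v > 0"
    and ep: "\<And>v \<kappa>. v \<in> V \<Longrightarrow> 0 < \<kappa> \<Longrightarrow> \<kappa> < ep v \<Longrightarrow> f v \<kappa> \<le> 0"
    by blast
  define \<epsilon> where "\<epsilon> = min k0 (Min (ep ` V))"
  have "\<epsilon> > 0" unfolding \<epsilon>_def using \<open>finite V\<close> \<open>V \<noteq> {}\<close> ep_pos \<open>k0 > 0\<close> by auto
  moreover have "\<epsilon> \<le> k0" unfolding \<epsilon>_def by simp
  ultimately obtain v where "v \<in> V" and "f v (\<epsilon> / 2) > 0" using pos[of "\<epsilon> / 2"] by auto
  have "Min (ep ` V) \<le> ep v" using \<open>v \<in> V\<close> \<open>finite V\<close> by simp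
  then have "\<epsilon> \<le> ep v" unfolding \<epsilon>_def by (simp add: min.coboundedI2)
  with \<open>\<epsilon> > 0\<close> have "f v (\<epsilon> / 2) \<le> 0" by (intro ep[OF \<open>v \<in> V\<close>]) simp_all
  with \<open>f v (\<epsilon> / 2) > 0\<close> show False by simp
qed

lemma initially_positive_vertex_if_Sup:
  fixes f :: "'a \<Rightarrow> real \<Rightarrow> real"
  assumes "finite V" and "V \<subseteq> S" and above: "\<forall>x\<in>S. \<forall>\<kappa>. \<exists>v\<in>V. f x \<kappa> \<le> f v \<kappa>"
    and polys: "\<forall>v\<in>V. \<exists>q. f v = poly q" and "S \<noteq> {}"
    and pos: "initially_positive (\<lambda>\<kappa>. Sup ((\<lambda>x. f x \<kappa>) ` S))"
    and change: "neg_sign_change (\<lambda>\<kappa>. Sup ((\<lambda>x. f x \<kappa>) ` S))"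
  shows "\<exists>v\<in>V. initially_positive (f v) \<and> (\<exists>\<kappa>>0. f v \<kappa> < 0)"
proof -
  have bdd: "bdd_above ((\<lambda>x. f x \<kappa>) ` S)" for \<kappa>
    using above by (intro bdd_above_image_if_dominated_by_finite[OF \<open>finite V\<close>]) blast
  obtain k0 where "k0 > 0" and k0: "\<And>\<kappa>. 0 < \<kappa> \<Longrightarrow> \<kappa> < k0 \<Longrightarrow> Sup ((\<lambda>x. f x \<kappa>) ` S) > 0"
    using pos unfolding initially_positive_def by blast
  have "\<exists>v\<in>V. f v \<kappa> > 0" if \<kappa>: "0 < \<kappa>" "\<kappa> < k0" for \<kappa>
  proof -
    obtain x where "x \<in> S" and "f x \<kappa> > 0"
      using less_cSupD[of "(\<lambda>x. f x \<kappa>) ` S"] k0[OF \<kappa>] \<open>S \<noteq> {}\<close> by blast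
    moreover from above \<open>x \<in> S\<close> obtain v where "v \<in> V" and "f x \<kappa> \<le> f v \<kappa>" by blast
    ultimately have "f v \<kappa> > 0" by simp
    with \<open>v \<in> V\<close> show ?thesis by blast
  qed
  then obtain v where "v \<in> V" and "initially_positive (f v)"
    using ex_initially_positive_poly_member[OF \<open>finite V\<close> polys \<open>k0 > 0\<close>] by blast
  moreover obtain \<kappa>\<^sub>1 \<kappa>\<^sub>2 where "0 \<le> \<kappa>\<^sub>1" "\<kappa>\<^sub>1 < \<kappa>\<^sub>2" and neg: "Sup ((\<lambda>x. f x \<kappa>\<^sub>2) ` S) < 0"
    using change unfolding neg_sign_change_def by blast
  moreover have "f v \<kappa>\<^sub>2 < 0"
  proof -
    have "f v \<kappa>\<^sub>2 \<le> Sup ((\<lambda>x. f x \<kappa>\<^sub>2) ` S)"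
      using \<open>v \<in> V\<close> \<open>V \<subseteq> S\<close> by (intro cSup_upper[OF _ bdd]) auto
    with neg show ?thesis by simp
  qed
  moreover have "\<kappa>\<^sub>2 > 0" using \<open>0 \<le> \<kappa>\<^sub>1\<close> \<open>\<kappa>\<^sub>1 < \<kappa>\<^sub>2\<close> by simp
  ultimately show ?thesis by blast
qed

lemma Jmat_eq_J_family:
  "Jmat B C J2 J4 D \<kappa> = J_family (real_of_int_mat B * D * real_of_int_mat C) J2 J4 \<kappa>"
  unfolding Jmat_def J_family_def ..

lemma index_mult_mat_diag_mult:
  assumes "B \<in> carrier_mat n m" and "C \<in> carrier_mat m n'" and "i < n" and "k < n'"
  shows "(B * mat_diag m d * C) $$ (i,k) = (\<Sum>l<m. B $$ (i,l) * d l * C $$ (l,k))"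
proof -
  have BD: "B * mat_diag m d = mat n m (\<lambda>(i,j). B $$ (i,j) * d j)"
    by (rule mat_diag_mult_right[OF assms(1)])
  have "(B * mat_diag m d * C) $$ (i,k) = (\<Sum>l<m. (B * mat_diag m d) $$ (i,l) * C $$ (l,k))"
    by (rule index_mult_mat_sum[OF _ assms(2-4)]) (simp add: BD)
  also have "\<dots> = (\<Sum>l<m. B $$ (i,l) * d l * C $$ (l,k))"
    using assms(3) by (intro sum.cong) (simp_all add: BD)
  finally show ?thesis .
qed

lemma det_Jmat_affine_in_diag_entry:
  assumes B: "B \<in> carrier_mat n m" and C: "C \<in> carrier_mat m n"
    and J2: "J2 \<in> carrier_mat n n" and J4: "J4 \<in> carrier_mat n n" and "j < m"
  shows "\<exists>\<alpha> \<beta>. \<forall>x. det (- Jmat B C J2 J4 (mat_diag m (d(j := x))) \<kappa>) = \<alpha> + x * \<beta>"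
proof -
  define rB rC where "rB = real_of_int_mat B" and "rC = real_of_int_mat C"
  have rB: "rB \<in> carrier_mat n m" and rC: "rC \<in> carrier_mat m n"
    using B C by (simp_all add: rB_def rC_def real_of_int_mat_def)
  define A where "A = - Jmat B C J2 J4 (mat_diag m (d(j := 0))) \<kappa>"
  have A: "A \<in> carrier_mat n n" using rB rC J2 J4 by (simp add: A_def Jmat_def flip: rB_def rC_def)
  have split: "(\<Sum>l<m. rB $$ (i,l) * (d(j := y)) l * rC $$ (l,k)) =
      rB $$ (i,j) * y * rC $$ (j,k) + (\<Sum>l\<in>{..<m} - {j}. rB $$ (i,l) * d l * rC $$ (l,k))" for i k y
  proof -
    have "(\<Sum>l<m. rB $$ (i,l) * (d(j := y)) l * rC $$ (l,k)) =
        rB $$ (i,j) * y * rC $$ (j,k) + (\<Sum>l\<in>{..<m} - {j}. rB $$ (i,l) * (d(j := y)) l * rC $$ (l,k))"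
      using \<open>j < m\<close> by (subst sum.remove[of "{..<m}" j]) simp_all
    also have "(\<Sum>l\<in>{..<m} - {j}. rB $$ (i,l) * (d(j := y)) l * rC $$ (l,k)) =
        (\<Sum>l\<in>{..<m} - {j}. rB $$ (i,l) * d l * rC $$ (l,k))"
      by (intro sum.cong) auto
    finally show ?thesis .
  qed
  have "- Jmat B C J2 J4 (mat_diag m (d(j := x))) \<kappa> =
      mat n n (\<lambda>(i,k). A $$ (i,k) + x * (- rB $$ (i,j)) * rC $$ (j,k))" for x
  proof (rule eq_matI)
    fix i k assume "i < dim_row (mat n n (\<lambda>(i,k). A $$ (i,k) + x * (- rB $$ (i,j)) * rC $$ (j,k)))"
      and "k < dim_col (mat n n (\<lambda>(i,k). A $$ (i,k) + x * (- rB $$ (i,j)) * rC $$ (j,k)))"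
    then have i: "i < n" and k: "k < n" by simp_all
    have "(rB * mat_diag m (d(j := x)) * rC) $$ (i,k) =
        (rB * mat_diag m (d(j := 0)) * rC) $$ (i,k) + x * rB $$ (i,j) * rC $$ (j,k)"
      unfolding index_mult_mat_diag_mult[OF rB rC i k] split by (simp add: algebra_simps)
    then show "(- Jmat B C J2 J4 (mat_diag m (d(j := x))) \<kappa>) $$ (i,k) =
        mat n n (\<lambda>(i,k). A $$ (i,k) + x * (- rB $$ (i,j)) * rC $$ (j,k)) $$ (i,k)"
      using i k rB rC J2 J4 by (simp add: A_def Jmat_def flip: rB_def rC_def)
  qed (use rB rC J4 in \<open>simp_all add: Jmat_def flip: rB_def rC_def\<close>)
  moreover obtain \<alpha> \<beta> where
    "\<forall>x. det (mat n n (\<lambda>(i,k). A $$ (i,k) + x * (- rB $$ (i,j)) * rC $$ (j,k))) = \<alpha> + x * \<beta>"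
    using det_rank_one_update_affine[OF A, of "\<lambda>i. - rB $$ (i,j)" "\<lambda>k. rC $$ (j,k)"] by blast
  ultimately show ?thesis by auto
qed

definition diag_vertices :: "nat \<Rightarrow> (nat \<Rightarrow> real) \<Rightarrow> (nat \<Rightarrow> real) \<Rightarrow> real mat set" where
  "diag_vertices m lo hi = mat_diag m ` PiE {..<m} (\<lambda>j. {lo j, hi j})"

lemma finite_diag_vertices: "finite (diag_vertices m lo hi)"
  unfolding diag_vertices_def by (intro finite_imageI finite_PiE) auto

lemma mat_diag_in_diag_vertices:
  assumes "\<forall>j<m. v j \<in> {lo j, hi j}"
  shows "mat_diag m v \<in> diag_vertices m lo hi"
proof -
  have "mat_diag m v = mat_diag m (restrict v {..<m})" by (intro eq_matI) (auto simp: mat_diag_def)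
  moreover have "restrict v {..<m} \<in> PiE {..<m} (\<lambda>j. {lo j, hi j})" using assms by auto
  ultimately show ?thesis unfolding diag_vertices_def by blast
qed

lemma diag_vertices_subset:
  assumes "\<forall>j<m. lo j \<le> hi j"
  shows "diag_vertices m lo hi \<subseteq> diag_set m lo hi"
proof
  fix D assume "D \<in> diag_vertices m lo hi"
  then obtain v where v: "v \<in> PiE {..<m} (\<lambda>j. {lo j, hi j})" and D: "D = mat_diag m v"
    unfolding diag_vertices_def by blast
  have "lo j \<le> v j \<and> v j \<le> hi j" if "j < m" for j
  proof -
    have "v j \<in> {lo j, hi j}" using v that by (auto simp: PiE_iff)
    with assms that show ?thesis by auto
  qed
  then show "D \<in> diag_set m lo hi" unfolding D by (auto simp: diag_set_def mat_diag_def diagonal_mat_def)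
qed

lemma diag_vertices_nonempty: "diag_vertices m lo hi \<noteq> {}"
  using mat_diag_in_diag_vertices[of m lo lo hi] by auto

lemma mat_diag_diag_entries:
  assumes "D \<in> diag_set m lo hi"
  shows "mat_diag m (\<lambda>j. D $$ (j,j)) = D"
  using assms by (intro eq_matI) (auto simp: diag_set_def diagonal_mat_def mat_diag_def)

lemma det_Jmat_max_at_vertex:
  assumes "B \<in> carrier_mat n m" and "C \<in> carrier_mat m n"
    and "J2 \<in> carrier_mat n n" and "J4 \<in> carrier_mat n n" and D: "D \<in> diag_set m lo hi"
  shows "\<exists>v\<in>diag_vertices m lo hi. det (- Jmat B C J2 J4 D \<kappa>) \<le> det (- Jmat B C J2 J4 v \<kappa>)"
proof -
  have "\<forall>j<m. lo j \<le> D $$ (j,j) \<and> D $$ (j,j) \<le> hi j" using D by (simp add: diag_set_def)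
  from multiaffine_max_at_vertex[OF det_Jmat_affine_in_diag_entry[OF assms(1-4)] this]
  obtain v where vertex: "\<forall>j<m. v j \<in> {lo j, hi j}"
    and le: "det (- Jmat B C J2 J4 (mat_diag m (\<lambda>j. D $$ (j,j))) \<kappa>) \<le> det (- Jmat B C J2 J4 (mat_diag m v) \<kappa>)"
    by blast
  from mat_diag_in_diag_vertices[OF vertex] have "mat_diag m v \<in> diag_vertices m lo hi" .
  with le show ?thesis unfolding mat_diag_diag_entries[OF D] by blast
qed

lemma det_Jmat_min_at_vertex:
  assumes "B \<in> carrier_mat n m" and "C \<in> carrier_mat m n"
    and "J2 \<in> carrier_mat n n" and "J4 \<in> carrier_mat n n" and D: "D \<in> diag_set m lo hi"
  shows "\<exists>v\<in>diag_vertices m lo hi. det (- Jmat B C J2 J4 v \<kappa>) \<le> det (- Jmat B C J2 J4 D \<kappa>)"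
proof -
  have "\<forall>j<m. lo j \<le> D $$ (j,j) \<and> D $$ (j,j) \<le> hi j" using D by (simp add: diag_set_def)
  from multiaffine_min_at_vertex[OF det_Jmat_affine_in_diag_entry[OF assms(1-4)] this]
  obtain v where vertex: "\<forall>j<m. v j \<in> {lo j, hi j}"
    and le: "det (- Jmat B C J2 J4 (mat_diag m v) \<kappa>) \<le> det (- Jmat B C J2 J4 (mat_diag m (\<lambda>j. D $$ (j,j))) \<kappa>)"
    by blast
  from mat_diag_in_diag_vertices[OF vertex] have "mat_diag m v \<in> diag_vertices m lo hi" .
  with le show ?thesis unfolding mat_diag_diag_entries[OF D] by blast
qed

lemma real_of_int_mat_mult_mult_carrier:
  assumes "B \<in> carrier_mat n m" and "C \<in> carrier_mat m n" and "D \<in> carrier_mat m m"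
  shows "real_of_int_mat B * D * real_of_int_mat C \<in> carrier_mat n n"
proof -
  have "real_of_int_mat B \<in> carrier_mat n m" and "real_of_int_mat C \<in> carrier_mat m n"
    using assms(1,2) by (simp_all add: real_of_int_mat_def)
  with assms(3) show ?thesis by (metis mult_carrier_mat)
qed

lemma det_Jmat_poly:
  assumes "B \<in> carrier_mat n m" and "C \<in> carrier_mat m n"
    and "J2 \<in> carrier_mat n n" and "J4 \<in> carrier_mat n n" and "D \<in> carrier_mat m m"
  shows "\<exists>q. (\<lambda>\<kappa>. det (- Jmat B C J2 J4 D \<kappa>)) = poly q"
  unfolding Jmat_eq_J_family using real_of_int_mat_mult_mult_carrier[OF assms(1,2,5)] assms(3,4)
  by (rule det_neg_J_family_poly)

lemma ex_diag_det_initially_positive_then_negative: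
  assumes carriers: "B \<in> carrier_mat n m" "C \<in> carrier_mat m n" "J2 \<in> carrier_mat n n" "J4 \<in> carrier_mat n n"
    and "\<forall>j<m. lo j \<le> hi j"
    and "(initially_positive (\<lambda>\<kappa>. Inf ((\<lambda>D. det (- Jmat B C J2 J4 D \<kappa>)) ` diag_set m lo hi)) \<and>
          neg_sign_change (\<lambda>\<kappa>. Inf ((\<lambda>D. det (- Jmat B C J2 J4 D \<kappa>)) ` diag_set m lo hi))) \<or>
         (initially_positive (\<lambda>\<kappa>. Sup ((\<lambda>D. det (- Jmat B C J2 J4 D \<kappa>)) ` diag_set m lo hi)) \<and>
          neg_sign_change (\<lambda>\<kappa>. Sup ((\<lambda>D. det (- Jmat B C J2 J4 D \<kappa>)) ` diag_set m lo hi)))"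
  shows "\<exists>D\<in>diag_set m lo hi. initially_positive (\<lambda>\<kappa>. det (- Jmat B C J2 J4 D \<kappa>)) \<and>
    (\<exists>\<kappa>>0. det (- Jmat B C J2 J4 D \<kappa>) < 0)"
proof -
  define f where "f = (\<lambda>D \<kappa>. det (- Jmat B C J2 J4 D \<kappa>))"
  let ?S = "diag_set m lo hi" and ?V = "diag_vertices m lo hi"
  have "?V \<subseteq> ?S" using assms(5) by (rule diag_vertices_subset)
  then have "?S \<noteq> {}" using diag_vertices_nonempty by blast
  have above: "\<forall>D\<in>?S. \<forall>\<kappa>. \<exists>v\<in>?V. f D \<kappa> \<le> f v \<kappa>"
    and below: "\<forall>D\<in>?S. \<forall>\<kappa>. \<exists>v\<in>?V. f v \<kappa> \<le> f D \<kappa>"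
    unfolding f_def using det_Jmat_max_at_vertex[OF carriers] det_Jmat_min_at_vertex[OF carriers]
    by simp_all
  have polys: "\<forall>v\<in>?V. \<exists>q. f v = poly q"
  proof
    fix v assume "v \<in> ?V"
    with \<open>?V \<subseteq> ?S\<close> have "v \<in> carrier_mat m m" by (auto simp: diag_set_def)
    from det_Jmat_poly[OF carriers this] show "\<exists>q. f v = poly q" unfolding f_def .
  qed
  have "(initially_positive (\<lambda>\<kappa>. Inf ((\<lambda>D. f D \<kappa>) ` ?S)) \<and> neg_sign_change (\<lambda>\<kappa>. Inf ((\<lambda>D. f D \<kappa>) ` ?S))) \<or>
      (initially_positive (\<lambda>\<kappa>. Sup ((\<lambda>D. f D \<kappa>) ` ?S)) \<and> neg_sign_change (\<lambda>\<kappa>. Sup ((\<lambda>D. f D \<kappa>) ` ?S)))"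
    using assms(6) unfolding f_def .
  then have "\<exists>D\<in>?S. initially_positive (f D) \<and> (\<exists>\<kappa>>0. f D \<kappa> < 0)"
  proof (elim disjE conjE)
    assume "initially_positive (\<lambda>\<kappa>. Inf ((\<lambda>D. f D \<kappa>) ` ?S))"
      and "neg_sign_change (\<lambda>\<kappa>. Inf ((\<lambda>D. f D \<kappa>) ` ?S))"
    with initially_positive_member_if_Inf[OF finite_diag_vertices below \<open>?S \<noteq> {}\<close>]
    show ?thesis by blast
  next
    assume "initially_positive (\<lambda>\<kappa>. Sup ((\<lambda>D. f D \<kappa>) ` ?S))"
      and "neg_sign_change (\<lambda>\<kappa>. Sup ((\<lambda>D. f D \<kappa>) ` ?S))"
    with initially_positive_vertex_if_Sup[OF finite_diag_vertices \<open>?V \<subseteq> ?S\<close> above polys \<open>?S \<noteq> {}\<close>]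
    have "\<exists>v\<in>?V. initially_positive (f v) \<and> (\<exists>\<kappa>>0. f v \<kappa> < 0)" by blast
    with \<open>?V \<subseteq> ?S\<close> show ?thesis by blast
  qed
  then show ?thesis unfolding f_def .
qed

theorem theorem2:
  fixes n m :: nat and B C :: "int mat" and J2 J4 :: "real mat"
    and lo hi :: "nat \<Rightarrow> real"
  assumes "n \<ge> 1" and "m \<ge> 1"
    and "B \<in> carrier_mat n m" and "C \<in> carrier_mat m n"
    and "\<forall>j<m. 0 \<le> lo j \<and> lo j \<le> hi j"
    and "J2 \<in> carrier_mat n n" and "J4 \<in> carrier_mat n n"
    and "symmetric_mat J2" and "symmetric_mat J4"
    \<comment> \<open>(A1)\<close>
    and A1a: "\<forall>D\<in>diag_set m lo hi.
               det (real_of_int_mat B * D * real_of_int_mat C) = 0 \<and>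
               num_neg_eigs (real_of_int_mat B * D * real_of_int_mat C) = n - 1"
    and A1b: "\<exists>v\<in>carrier_vec n. v \<noteq> 0\<^sub>v n \<and> (\<forall>i<n. v $ i \<ge> 0) \<and>
               transpose_mat (real_of_int_mat B) *\<^sub>v v = 0\<^sub>v m"
    \<comment> \<open>(A2)\<close>
    and "indefinite_mat n J2" and "neg_semidef_mat n J4"
    and "\<exists>\<kappa>. neg_def_mat n (\<kappa>^2 \<cdot>\<^sub>m J2 + \<kappa>^4 \<cdot>\<^sub>m J4)"
    \<comment> \<open>hypothesis on \<Psi>^- or \<Psi>^+\<close>
    and "let PsiM = (\<lambda>\<kappa>. Inf ((\<lambda>D. det (- Jmat B C J2 J4 D \<kappa>)) ` diag_set m lo hi));
             PsiP = (\<lambda>\<kappa>. Sup ((\<lambda>D. det (- Jmat B C J2 J4 D \<kappa>)) ` diag_set m lo hi))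
         in (initially_positive PsiM \<and> neg_sign_change PsiM) \<or>
            (initially_positive PsiP \<and> neg_sign_change PsiP)"
  shows "\<exists>D\<in>diag_set m lo hi. microphase_sep (\<lambda>\<kappa>. spectral_abscissa (Jmat B C J2 J4 D \<kappa>))"
proof -
  obtain D \<kappa>\<^sub>2 where D: "D \<in> diag_set m lo hi"
    and pos: "initially_positive (\<lambda>\<kappa>. det (- Jmat B C J2 J4 D \<kappa>))"
    and "\<kappa>\<^sub>2 > 0" and neg: "det (- Jmat B C J2 J4 D \<kappa>\<^sub>2) < 0"
    using ex_diag_det_initially_positive_then_negative[OF assms(3,4,6,7) _ assms(15)[unfolded Let_def]]
      assms(5) by auto
  obtain \<kappa>\<^sub>0 where nd: "neg_def_mat n (\<kappa>\<^sub>0^2 \<cdot>\<^sub>m J2 + \<kappa>\<^sub>0^4 \<cdot>\<^sub>m J4)" using assms(14) by blast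
  let ?M = "real_of_int_mat B * D * real_of_int_mat C"
  have "?M \<in> carrier_mat n n"
    using real_of_int_mat_mult_mult_carrier[OF assms(3,4)] D by (simp add: diag_set_def)
  from microphase_sep_J_family[OF this assms(6,7,1) _ _ assms(13) nd _ \<open>\<kappa>\<^sub>2 > 0\<close>]
  have "microphase_sep (\<lambda>\<kappa>. spectral_abscissa (J_family ?M J2 J4 \<kappa>))"
    using A1a D pos neg unfolding Jmat_eq_J_family by blast
  with D show ?thesis unfolding Jmat_eq_J_family by blast
qed

end
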